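(* Let $k\ge1$ and $B>0$ be constants. Consider the Ising model on the complete bipartite graph with parts $V_L,V_R$, $|V_L|=n$, $|V_R|=kn$, with $\beta_{uv}=-\frac12\log(1-\frac{B}{n\sqrt k})$ for all edges and $\gamma_v=0$ for all $v$. For each $n$ let $(\hat\alpha_L^{(n)},\hat\alpha_R^{(n)})$ be a phase maximizing $\Pr(\alpha_L,\alpha_R)$. Then as $n\to\infty$, $(\hat\alpha_L^{(n)},\hat\alpha_R^{(n)})\to(1/2,1/2)$ if $B\le2$, and $(\hat\alpha_L^{(n)},\hat\alpha_R^{(n)})\to(\alpha_L^*,\alpha_R^* )$ if $B>2$, where $(\alpha_L^*,\alpha_R^* )$ is the unique solution in $(1/2,1)^2$ of $\exp(B\sqrt k(1-2\alpha_R))=\frac{1-\alpha_L}{\alpha_L}$, $\exp(\frac{B}{\sqrt k}(1-2\alpha_L))=\frac{1-\alpha_R}{\alpha_R}$.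
   Context: Ising model: $\mu(\sigma)\propto\exp(\sum_{(u,v)\in E}\beta_{uv}\sigma_u\sigma_v)$ on $\{-1,1\}^{V_L\cup V_R}$. Phase: for $\sigma$, let $V_s(\sigma)$ be the set of vertices of spin $s$ and let $s$ be a spin with $|V_s(\sigma)|\ge(|V_L|+|V_R|)/2$; then $\alpha(\sigma)=\big(|V_s(\sigma)\cap V_L|/|V_L|,\,|V_s(\sigma)\cap V_R|/|V_R|\big)$. $\Pr(\alpha_L,\alpha_R)=\sum_{\sigma:\alpha(\sigma)=(\alpha_L,\alpha_R)}\mu(\sigma)$. *)

theory Defs
  imports "HOL-Analysis.Analysis"
begin

definition spin_configs :: "'v set \<Rightarrow> ('v \<Rightarrow> int) set" where
  "spin_configs V = PiE V (\<lambda>_. {-1, 1})"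

definition ising_weight :: "('v \<times> 'v) set \<Rightarrow> ('v \<Rightarrow> 'v \<Rightarrow> real) \<Rightarrow> ('v \<Rightarrow> int) \<Rightarrow> real" where
  "ising_weight E \<beta> \<sigma> = exp (\<Sum>(u,v)\<in>E. \<beta> u v * real_of_int (\<sigma> u) * real_of_int (\<sigma> v))"

definition ising_Z :: "'v set \<Rightarrow> ('v \<times> 'v) set \<Rightarrow> ('v \<Rightarrow> 'v \<Rightarrow> real) \<Rightarrow> real" where
  "ising_Z V E \<beta> = (\<Sum>\<sigma>\<in>spin_configs V. ising_weight E \<beta> \<sigma>)"

definition ising_mu :: "'v set \<Rightarrow> ('v \<times> 'v) set \<Rightarrow> ('v \<Rightarrow> 'v \<Rightarrow> real) \<Rightarrow> ('v \<Rightarrow> int) \<Rightarrow> real" where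
  "ising_mu V E \<beta> \<sigma> = ising_weight E \<beta> \<sigma> / ising_Z V E \<beta>"

definition majority_spin :: "'v set \<Rightarrow> 'v set \<Rightarrow> ('v \<Rightarrow> int) \<Rightarrow> int" where
  "majority_spin VL VR \<sigma> =
     (if 2 * card {v \<in> VL \<union> VR. \<sigma> v = 1} \<ge> card VL + card VR then 1 else -1)"

definition phase :: "'v set \<Rightarrow> 'v set \<Rightarrow> ('v \<Rightarrow> int) \<Rightarrow> real \<times> real" where
  "phase VL VR \<sigma> =
     (let s = majority_spin VL VR \<sigma> in
       (real (card {v \<in> VL. \<sigma> v = s}) / real (card VL),
        real (card {v \<in> VR. \<sigma> v = s}) / real (card VR)))"

definition phase_prob :: "'v set \<Rightarrow> 'v set \<Rightarrow> ('v \<times> 'v) set \<Rightarrow> ('v \<Rightarrow> 'v \<Rightarrow> real)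
    \<Rightarrow> real \<times> real \<Rightarrow> real" where
  "phase_prob VL VR E \<beta> a =
     (\<Sum>\<sigma>\<in>{\<sigma> \<in> spin_configs (VL \<union> VR). phase VL VR \<sigma> = a}. ising_mu (VL \<union> VR) E \<beta> \<sigma>)"

definition VLn :: "nat \<Rightarrow> (nat + nat) set" where
  "VLn n = Inl ` {..<n}"

definition VRn :: "nat \<Rightarrow> nat \<Rightarrow> (nat + nat) set" where
  "VRn k n = Inr ` {..<k * n}"

definition beta_n :: "nat \<Rightarrow> real \<Rightarrow> nat \<Rightarrow> real" where
  "beta_n k B n = - (1/2) * ln (1 - B / (real n * sqrt (real k)))"

definition Pr_bip :: "nat \<Rightarrow> real \<Rightarrow> nat \<Rightarrow> real \<times> real \<Rightarrow> real" where
  "Pr_bip k B n a =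
     phase_prob (VLn n) (VRn k n) (VLn n \<times> VRn k n) (\<lambda>_ _. beta_n k B n) a"

end

theory Submission
  imports Defs "HOL-Real_Asymp.Real_Asymp"
begin

text \<open>Counting configurations by the numbers of majority spins on the two sides, the weight
  Pr q * Z of a phase q = (i / n, j / m) lies between exp (n F q) / ((n + 1) (m + 1)) and
  2 exp (n F q), where F (a, b) = H a + K H b + c (2 a - 1) (2 b - 1), H is the binary entropy,
  K = m / n = k, and the coupling c = \<beta> m tends to B sqrt k / 2. Hence the maximizing phases
  converge to the maximizer of the limiting F over the phases allowed by the majority convention,
  as soon as this maximizer is unique.

  If c \<le> sqrt K, i.e. B \<le> 2, the bound H a \<le> ln 2 - (2 a - 1)^2 / 2 shows that (1/2, 1/2) is the
  unique maximizer. Otherwise maximizing first over a (Gibbs' inequality) leaves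
  ln (exp (c y) + exp (- c y)) + K H ((1 + y) / 2) in y = 2 b - 1, whose stationary points in (0, 1)
  solve artanh y / tanh (c y) = c / K. This ratio increases strictly from 1 / c, so there is exactly
  one such point, and it corresponds to the unique solution of the mean-field equations.\<close>

section \<open>Binary entropy\<close>

definition bin_entropy :: "real \<Rightarrow> real" where
  "bin_entropy a = - (a * ln a) - (1 - a) * ln (1 - a)"

lemma bin_entropy_one_minus: "bin_entropy (1 - a) = bin_entropy a"
  unfolding bin_entropy_def by simp

lemma bin_entropy_0 [simp]: "bin_entropy 0 = 0" and bin_entropy_1 [simp]: "bin_entropy 1 = 0"
  unfolding bin_entropy_def by simp_all

lemma bin_entropy_half: "bin_entropy (1/2) = ln 2"
  unfolding bin_entropy_def by (simp add: ln_div)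

lemma continuous_on_x_ln_x: "continuous_on {0..} (\<lambda>x::real. x * ln x)"
proof (clarsimp simp: continuous_on_eq_continuous_within)
  fix x :: real assume "0 \<le> x"
  show "continuous (at x within {0..}) (\<lambda>x. x * ln x)"
  proof (cases "x = 0")
    case True
    have "((\<lambda>x::real. x * ln x) \<longlongrightarrow> 0) (at_right 0)"
      by real_asymp
    moreover have "at (0::real) within {0..} = at_right 0"
      by (rule at_within_Ici_at_right)
    ultimately show ?thesis
      using True by (simp add: continuous_within)
  next
    case False
    then have "isCont (\<lambda>x. x * ln x) x"
      using \<open>0 \<le> x\<close> by (auto intro!: continuous_intros)
    then show ?thesis
      by (rule continuous_at_imp_continuous_within)
  qed
qed

lemma continuous_on_bin_entropy: "continuous_on {0..1} bin_entropy"
proof -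
  have "continuous_on {0..1} (\<lambda>a::real. a * ln a)"
    by (rule continuous_on_subset[OF continuous_on_x_ln_x]) auto
  moreover have "continuous_on {0..1} (\<lambda>a::real. (1 - a) * ln (1 - a))"
    by (rule continuous_on_compose2[OF continuous_on_x_ln_x, of "{0..1}" "\<lambda>a. 1 - a"])
      (auto intro!: continuous_intros)
  ultimately show ?thesis
    unfolding bin_entropy_def[abs_def] by (intro continuous_on_diff continuous_on_minus)
qed

lemma tanh_real_exp_altdef: "tanh (t::real) = (exp t - exp (-t)) / (exp t + exp (-t))"
proof -
  have "exp t + exp (-t) > 0"
    by (simp add: add_pos_pos)
  then show ?thesis
    by (simp add: tanh_def sinh_field_def cosh_field_def divide_simps) (simp add: algebra_simps)
qed

lemma bin_entropy_tanh_eq: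
  "bin_entropy ((1 + tanh t) / 2) + t * tanh t = ln (exp t + exp (-t))"
proof -
  define S where "S = exp t + exp (-t)"
  define x y where "x = exp t / S" and "y = exp (-t) / S"
  have S: "S > 0"
    unfolding S_def by (simp add: add_pos_pos)
  have xy: "x + y = 1"
    using S by (simp add: x_def y_def S_def add_divide_distrib[symmetric])
  have ln_x: "ln x = t - ln S" and ln_y: "ln y = - t - ln S"
    using S by (simp_all add: x_def y_def ln_div)
  have tanh_t: "tanh t = x - y"
    unfolding tanh_real_exp_altdef x_def y_def S_def by (simp add: diff_divide_distrib)
  have one_minus_x: "1 - x = y"
    using xy by simp
  have half: "(1 + tanh t) / 2 = x"
    unfolding tanh_t one_minus_x[symmetric] by simp
  have "bin_entropy ((1 + tanh t) / 2) + t * tanh t = bin_entropy x + t * (x - y)"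
    unfolding half by (simp add: tanh_t)
  also have "\<dots> = (x + y) * ln S"
    unfolding bin_entropy_def one_minus_x ln_x ln_y by (simp add: algebra_simps)
  finally show ?thesis
    unfolding xy S_def by simp
qed

lemma ln_less_minus_one:
  fixes x :: real
  assumes "0 < x" "x \<noteq> 1"
  shows "ln x < x - 1"
proof -
  have "ln x = 2 * ln (sqrt x)"
    using assms by (simp add: ln_sqrt)
  also have "\<dots> \<le> 2 * (sqrt x - 1)"
    using ln_le_minus_one[of "sqrt x"] assms by simp
  also have "\<dots> < x - 1"
  proof -
    have "(sqrt x - 1)^2 > 0"
      using assms by simp
    then show ?thesis
      using assms by (simp add: power2_eq_square algebra_simps)
  qed
  finally show ?thesis .
qed

lemma gibbs_inequality_two_point:
  fixes a u v :: real
  assumes a: "0 < a" "a < 1" and uv: "u > 0" "v > 0" "a * u + (1 - a) * v = 1" "u \<noteq> 1"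
  shows "a * ln u + (1 - a) * ln v < 0"
proof -
  have "a * ln u < a * (u - 1)"
    using a ln_less_minus_one[OF uv(1,4)] by simp
  moreover have "(1 - a) * ln v \<le> (1 - a) * (v - 1)"
    using a ln_le_minus_one[OF uv(2)] by (simp add: mult_left_mono)
  ultimately show ?thesis
    using uv(3) by (simp add: algebra_simps)
qed

lemma bin_entropy_add_linear_less:
  fixes a t :: real
  assumes "0 \<le> a" "a \<le> 1" "2 * a - 1 \<noteq> tanh t"
  shows "bin_entropy a + t * (2 * a - 1) < ln (exp t + exp (-t))"
proof -
  define S where "S = exp t + exp (-t)"
  have S: "S > 0"
    unfolding S_def by (simp add: add_pos_pos)
  consider "a = 0 \<or> a = 1" | "0 < a" "a < 1"
    using assms by fastforce
  then show ?thesis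
  proof cases
    case 1
    have "exp t < S" "exp (-t) < S"
      by (simp_all add: S_def)
    then have "t < ln S" "- t < ln S"
      using ln_less_cancel_iff[of "exp t" S] ln_less_cancel_iff[of "exp (-t)" S] S by auto
    then show ?thesis
      using 1 by (auto simp: S_def)
  next
    case 2
    \<comment> \<open>Gibbs' inequality against the distribution (exp t, exp (-t)) / S\<close>
    define u v where "u = exp t / (a * S)" and "v = exp (-t) / ((1 - a) * S)"
    have u: "u > 0" and v: "v > 0"
      using 2 S by (auto simp: u_def v_def)
    have ln_u: "ln u = t - ln a - ln S" and ln_v: "ln v = - t - ln (1 - a) - ln S"
      using 2 S by (simp_all add: u_def v_def ln_div ln_mult)
    have "a * u = exp t / S" "(1 - a) * v = exp (-t) / S"
      using 2 S by (simp_all add: u_def v_def)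
    then have "a * u + (1 - a) * v = 1"
      using S by (simp add: S_def add_divide_distrib[symmetric])
    moreover have "u \<noteq> 1"
    proof
      assume "u = 1"
      then have "exp t = a * S"
        using 2 S by (simp add: u_def field_simps)
      then have "2 * a - 1 = tanh t"
        using S unfolding tanh_real_exp_altdef S_def[symmetric] by (simp add: S_def field_simps)
      with assms(3) show False ..
    qed
    ultimately have "a * ln u + (1 - a) * ln v < 0"
      using gibbs_inequality_two_point 2 u v by blast
    moreover have "ln S - (bin_entropy a + t * (2 * a - 1)) = - (a * ln u) - (1 - a) * ln v"
      unfolding bin_entropy_def ln_u ln_v by (simp add: algebra_simps)
    ultimately show ?thesis
      unfolding S_def by linarith
  qed
qed

lemma bin_entropy_add_linear_le:
  fixes a t :: real
  assumes "0 \<le> a" "a \<le> 1"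
  shows "bin_entropy a + t * (2 * a - 1) \<le> ln (exp t + exp (-t))"
proof (cases "2 * a - 1 = tanh t")
  case True
  then show ?thesis
    using bin_entropy_tanh_eq[of t] unfolding True[symmetric] by simp
qed (use bin_entropy_add_linear_less[OF assms] in fastforce)

lemma has_real_derivative_bin_entropy_half:
  fixes x :: real
  assumes "-1 < x" "x < 1"
  shows "((\<lambda>x. bin_entropy ((1 + x) / 2)) has_real_derivative - artanh x) (at x)"
proof -
  have pos: "(1 + x) / 2 > 0" "(1 - x) / 2 > 0"
    using assms by auto
  have x_ln_x: "((\<lambda>x. x * ln x) has_real_derivative (ln u + 1)) (at u)" if "u > 0" for u :: real
    using that by (auto intro!: derivative_eq_intros)
  have plus: "((\<lambda>x::real. (1 + x) / 2) has_real_derivative 1/2) (at x)"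
    and minus: "((\<lambda>x::real. (1 - x) / 2) has_real_derivative -1/2) (at x)"
    by (auto intro!: derivative_eq_intros)
  have "((\<lambda>x. - ((1 + x) / 2 * ln ((1 + x) / 2)) - (1 - x) / 2 * ln ((1 - x) / 2))
      has_real_derivative - ((ln ((1 + x) / 2) + 1) * (1/2)) - (ln ((1 - x) / 2) + 1) * (-1/2)) (at x)"
    by (intro DERIV_diff DERIV_minus DERIV_chain2[OF x_ln_x plus] DERIV_chain2[OF x_ln_x minus] pos)
  moreover have "(\<lambda>x. - ((1 + x) / 2 * ln ((1 + x) / 2)) - (1 - x) / 2 * ln ((1 - x) / 2))
      = (\<lambda>x. bin_entropy ((1 + x) / 2))"
    by (simp add: bin_entropy_def field_simps)
  moreover have "- ((ln ((1 + x) / 2) + 1) * (1/2)) - (ln ((1 - x) / 2) + 1) * (-1/2) = - artanh x"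
    using assms by (simp add: artanh_def ln_div field_simps)
  ultimately show ?thesis
    by simp
qed

lemma artanh_greater:
  fixes x :: real
  assumes "0 < x" "x < 1"
  shows "x < artanh x"
proof -
  have "artanh 0 - 0 < artanh x - x"
  proof (rule DERIV_pos_imp_increasing_open[OF assms(1)])
    fix y :: real
    assume y: "0 < y" "y < x"
    then have "0 < y^2" "y^2 < 1"
      using assms by (simp_all add: power_less_one_iff abs_less_iff)
    then have "1 / (1 - y^2) - 1 > 0"
      by (simp add: field_simps)
    moreover have "((\<lambda>x. artanh x - x) has_real_derivative (1 / (1 - y^2) - 1)) (at y)"
      using y assms by (auto intro!: derivative_eq_intros)
    ultimately show "\<exists>d. ((\<lambda>x. artanh x - x) has_real_derivative d) (at y) \<and> d > 0"
      by blast
  qed (use assms in \<open>auto intro!: continuous_intros\<close>)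
  then show ?thesis
    by simp
qed

lemma bin_entropy_half_less_quadratic:
  fixes x :: real
  assumes "0 < x" "x \<le> 1"
  shows "bin_entropy ((1 + x) / 2) < ln 2 - x^2 / 2"
proof -
  define \<psi> where "\<psi> = (\<lambda>x::real. ln 2 - x^2 / 2 - bin_entropy ((1 + x) / 2))"
  have "\<psi> 0 < \<psi> x"
  proof (rule DERIV_pos_imp_increasing_open[OF assms(1)])
    fix y :: real
    assume y: "0 < y" "y < x"
    then have "(\<psi> has_real_derivative (- y + artanh y)) (at y)"
      unfolding \<psi>_def using assms
      by (auto intro!: derivative_eq_intros has_real_derivative_bin_entropy_half)
    moreover have "- y + artanh y > 0"
      using artanh_greater[of y] y assms by simp
    ultimately show "\<exists>d. (\<psi> has_real_derivative d) (at y) \<and> d > 0"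
      by blast
  next
    have "continuous_on {0..x} (\<lambda>y. bin_entropy ((1 + y) / 2))"
      by (rule continuous_on_compose2[OF continuous_on_bin_entropy, of _ "\<lambda>y. (1 + y) / 2"])
        (use assms in \<open>auto intro!: continuous_intros\<close>)
    then show "continuous_on {0..x} \<psi>"
      unfolding \<psi>_def by (intro continuous_intros) auto
  qed
  then show ?thesis
    by (simp add: \<psi>_def bin_entropy_half)
qed

lemma bin_entropy_less_quadratic:
  fixes a :: real
  assumes "0 \<le> a" "a \<le> 1" "a \<noteq> 1/2"
  shows "bin_entropy a < ln 2 - (2 * a - 1)^2 / 2"
proof (cases "a > 1/2")
  case True
  then show ?thesis
    using bin_entropy_half_less_quadratic[of "2 * a - 1"] assms by simp
next
  case False
  have reflect: "(1 + (1 - 2 * a)) / 2 = 1 - a" "(1 - 2 * a)^2 = (2 * a - 1)^2"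
    by (simp_all add: power2_commute)
  have "bin_entropy (1 - a) < ln 2 - (2 * a - 1)^2 / 2"
    using bin_entropy_half_less_quadratic[of "1 - 2 * a"] False assms unfolding reflect by simp
  then show ?thesis
    by (simp add: bin_entropy_one_minus)
qed

lemma bin_entropy_le_quadratic:
  fixes a :: real
  assumes "0 \<le> a" "a \<le> 1"
  shows "bin_entropy a \<le> ln 2 - (2 * a - 1)^2 / 2"
proof (cases "a = 1/2")
  case True
  show ?thesis
    unfolding True by (simp add: bin_entropy_half)
qed (use bin_entropy_less_quadratic[OF assms] in fastforce)

section \<open>The ratio artanh y / tanh (c y)\<close>

lemma sinh_mult_cosh_ge:
  fixes u :: real
  assumes "0 \<le> u"
  shows "u \<le> sinh u * cosh u"
proof -
  have "sinh 0 * cosh 0 - 0 \<le> sinh u * cosh u - u"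
  proof (rule DERIV_nonneg_imp_increasing_open[OF assms])
    fix x :: real
    have "((\<lambda>u. sinh u * cosh u - u) has_real_derivative (cosh x * cosh x + sinh x * sinh x - 1)) (at x)"
      by (auto intro!: derivative_eq_intros)
    moreover have "cosh x * cosh x + sinh x * sinh x - 1 = 2 * sinh x ^ 2"
      using cosh_square_eq[of x] by (simp add: power2_eq_square)
    ultimately show "\<exists>y. ((\<lambda>u. sinh u * cosh u - u) has_real_derivative y) (at x) \<and> y \<ge> 0"
      by (metis zero_le_mult_iff zero_le_numeral zero_le_power2)
  qed (intro continuous_intros)
  then show ?thesis
    by simp
qed

lemma mult_one_minus_tanh_sq_le:
  fixes u :: real
  assumes "0 \<le> u"
  shows "u * (1 - tanh u ^ 2) \<le> tanh u"
proof -
  have cosh: "cosh u > 0"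
    by simp
  have "1 - tanh u ^ 2 = (cosh u ^ 2 - sinh u ^ 2) / cosh u ^ 2"
    using cosh by (simp add: tanh_def power_divide field_simps)
  then have "1 - tanh u ^ 2 = 1 / cosh u ^ 2"
    using cosh_square_eq[of u] by simp
  then have "u * (1 - tanh u ^ 2) = u / cosh u ^ 2"
    by simp
  also have "\<dots> \<le> sinh u * cosh u / cosh u ^ 2"
    using sinh_mult_cosh_ge[OF assms] by (intro divide_right_mono) auto
  also have "\<dots> = tanh u"
    using cosh by (simp add: tanh_def power2_eq_square)
  finally show ?thesis .
qed

lemma one_minus_sq_mult_artanh_less:
  fixes y :: real
  assumes "0 < y" "y < 1"
  shows "(1 - y^2) * artanh y < y"
proof -
  define m where "m = (\<lambda>y::real. y - (1 - y^2) * artanh y)"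
  have "m 0 < m y"
  proof (rule DERIV_pos_imp_increasing_open[OF assms(1)])
    fix x :: real
    assume x: "0 < x" "x < y"
    then have "x^2 < 1"
      using assms by (simp add: power_less_one_iff abs_less_iff)
    have "(m has_real_derivative (1 - ((0 - 2 * x) * artanh x + (1 - x^2) * (1 / (1 - x^2))))) (at x)"
      unfolding m_def using x assms by (auto intro!: derivative_eq_intros simp: power2_eq_square)
    moreover have "1 - ((0 - 2 * x) * artanh x + (1 - x^2) * (1 / (1 - x^2))) = 2 * x * artanh x"
      using \<open>x^2 < 1\<close> by (simp add: field_simps)
    ultimately have "(m has_real_derivative (2 * x * artanh x)) (at x)"
      by simp
    moreover have "2 * x * artanh x > 0"
      using artanh_greater[of x] x assms by simp
    ultimately show "\<exists>d. (m has_real_derivative d) (at x) \<and> d > 0"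
      by blast
  next
    show "continuous_on {0..y} m"
      unfolding m_def using assms by (intro continuous_intros) auto
  qed
  then show ?thesis
    unfolding m_def by simp
qed

definition artanh_tanh_ratio :: "real \<Rightarrow> real \<Rightarrow> real" where
  "artanh_tanh_ratio c y = artanh y / tanh (c * y)"

lemma artanh_tanh_ratio_deriv_pos:
  fixes c y :: real
  assumes c: "c > 0" and y: "0 < y" "y < 1"
  shows "\<exists>d. (artanh_tanh_ratio c has_real_derivative d) (at y) \<and> d > 0"
proof -
  define T where "T = tanh (c * y)"
  have T: "T > 0" "1 - T^2 > 0"
    using c y tanh_real_bounds[of "c * y"] by (auto simp: T_def abs_square_less_1)
  have y_sq: "y^2 < 1"
    using y by (simp add: power_less_one_iff abs_less_iff)
  have deriv: "(artanh_tanh_ratio c has_real_derivative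
      (T / (1 - y^2) - artanh y * ((1 - T^2) * c)) / (T * T)) (at y)"
    unfolding artanh_tanh_ratio_def[abs_def] T_def using y c T
    by (auto intro!: derivative_eq_intros simp: T_def)
  have "artanh y * ((1 - T^2) * c) < y / (1 - y^2) * ((1 - T^2) * c)"
    using one_minus_sq_mult_artanh_less[OF y] y_sq T c
    by (intro mult_strict_right_mono) (simp_all add: field_simps)
  also have "\<dots> = c * y * (1 - T^2) / (1 - y^2)"
    by (simp add: field_simps)
  also have "\<dots> \<le> T / (1 - y^2)"
    using mult_one_minus_tanh_sq_le[of "c * y"] c y y_sq
    by (simp add: T_def divide_right_mono)
  finally show ?thesis
    using deriv T by (intro exI[of _ "(T / (1 - y^2) - artanh y * ((1 - T^2) * c)) / (T * T)"]) simp
qed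

lemma strict_mono_on_artanh_tanh_ratio:
  assumes "c > 0"
  shows "strict_mono_on {0<..<1} (artanh_tanh_ratio c)"
proof (rule strict_mono_onI)
  fix y1 y2 :: real
  assume y: "y1 \<in> {0<..<1}" "y2 \<in> {0<..<1}" "y1 < y2"
  show "artanh_tanh_ratio c y1 < artanh_tanh_ratio c y2"
  proof (rule DERIV_pos_imp_increasing_open[OF \<open>y1 < y2\<close>])
    fix y
    assume "y1 < y" "y < y2"
    then show "\<exists>d. (artanh_tanh_ratio c has_real_derivative d) (at y) \<and> d > 0"
      using artanh_tanh_ratio_deriv_pos[OF assms, of y] y by simp
  next
    show "continuous_on {y1..y2} (artanh_tanh_ratio c)"
      unfolding artanh_tanh_ratio_def[abs_def] using y assms by (intro continuous_intros) auto
  qed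
qed

lemma artanh_tanh_ratio_tendsto_0:
  assumes "c > 0"
  shows "(artanh_tanh_ratio c \<longlongrightarrow> inverse c) (at_right 0)"
  using assms unfolding artanh_tanh_ratio_def[abs_def] tanh_real_altdef artanh_def by real_asymp

lemma artanh_le_artanh_tanh_ratio:
  assumes "c > 0" "0 < y" "y < 1"
  shows "artanh y \<le> artanh_tanh_ratio c y"
proof -
  have "0 < tanh (c * y)" "tanh (c * y) \<le> 1"
    using assms tanh_real_lt_1[of "c * y"] by auto
  moreover have "artanh y > 0"
    using artanh_greater[of y] assms by simp
  ultimately show ?thesis
    unfolding artanh_tanh_ratio_def by (simp add: le_divide_eq mult_left_le)
qed

lemma artanh_tanh_ratio_eq_solvable:
  fixes c K :: real
  assumes c: "c > 0" and K: "K > 0" "K < c^2"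
  shows "\<exists>y\<in>{0<..<1}. artanh_tanh_ratio c y = c / K"
proof -
  have "inverse c < c / K"
    using c K by (simp add: field_simps power2_eq_square)
  then have "eventually (\<lambda>y. artanh_tanh_ratio c y < c / K) (at_right 0)"
    by (rule order_tendstoD(2)[OF artanh_tanh_ratio_tendsto_0[OF c]])
  then obtain b where b: "b > 0" "\<And>y. 0 < y \<Longrightarrow> y < b \<Longrightarrow> artanh_tanh_ratio c y < c / K"
    unfolding eventually_at_right_field by auto
  define y0 where "y0 = min (b / 2) (1 / 2)"
  have y0: "y0 \<in> {0<..<1}" "artanh_tanh_ratio c y0 < c / K"
    using b by (auto simp: y0_def)
  \<comment> \<open>near 1 the ratio exceeds artanh, which is unbounded\<close>
  define y1 where "y1 = tanh (c / K + 1)"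
  have "c / K + 1 > 0"
    using c K by (simp add: add_pos_pos)
  then have y1: "y1 \<in> {0<..<1}"
    by (simp add: y1_def tanh_real_lt_1)
  then have y1_gt: "artanh_tanh_ratio c y1 > c / K"
    using artanh_le_artanh_tanh_ratio[OF c, of y1] by (simp add: y1_def artanh_tanh_real)
  have "y0 < y1"
  proof (rule ccontr)
    assume "\<not> y0 < y1"
    then have "artanh_tanh_ratio c y1 \<le> artanh_tanh_ratio c y0"
      using strict_mono_on_leD[OF strict_mono_on_artanh_tanh_ratio[OF c]] y0(1) y1 by simp
    then show False
      using y0(2) y1_gt by simp
  qed
  moreover have "\<forall>x. y0 \<le> x \<and> x \<le> y1 \<longrightarrow> isCont (artanh_tanh_ratio c) x"
    using y0 y1 c unfolding artanh_tanh_ratio_def[abs_def] by (auto intro!: continuous_intros)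
  ultimately obtain y where "y0 \<le> y" "y \<le> y1" "artanh_tanh_ratio c y = c / K"
    using IVT[of "artanh_tanh_ratio c" y0 "c / K" y1] y0 y1_gt by auto
  then show ?thesis
    using y0 y1 by auto
qed

section \<open>The free energy\<close>

definition free_energy :: "real \<Rightarrow> real \<Rightarrow> real \<times> real \<Rightarrow> real" where
  "free_energy c K q =
     bin_entropy (fst q) + K * bin_entropy (snd q) + c * (2 * fst q - 1) * (2 * snd q - 1)"

text \<open>The closure of the phases (i / n, j / m) with n + m \<le> 2 (i + j), where K = m / n.\<close>
definition majority_region :: "real \<Rightarrow> (real \<times> real) set" where
  "majority_region K = ({0..1} \<times> {0..1}) \<inter> {q. (1 + K) / 2 \<le> fst q + K * snd q}"

text \<open>The maximum of the free energy over the first coordinate (by Gibbs' inequality),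
  as a function of y = 2 b - 1 for the second coordinate b.\<close>
definition reduced_free_energy :: "real \<Rightarrow> real \<Rightarrow> real \<Rightarrow> real" where
  "reduced_free_energy c K y = ln (exp (c * y) + exp (- (c * y))) + K * bin_entropy ((1 + y) / 2)"

lemma reduced_free_energy_minus: "reduced_free_energy c K (- y) = reduced_free_energy c K y"
proof -
  have "(1 + - y) / 2 = 1 - (1 + y) / 2"
    by (simp add: field_simps)
  then have "bin_entropy ((1 + - y) / 2) = bin_entropy ((1 + y) / 2)"
    by (simp only: bin_entropy_one_minus)
  then show ?thesis
    unfolding reduced_free_energy_def by (simp add: add.commute)
qed

lemma has_real_derivative_reduced_free_energy:
  assumes "-1 < y" "y < 1"
  shows "(reduced_free_energy c K has_real_derivative (c * tanh (c * y) - K * artanh y)) (at y)"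
proof -
  have S: "exp (c * y) + exp (- (c * y)) > 0"
    by (simp add: add_pos_pos)
  have "((\<lambda>y. ln (exp (c * y) + exp (- (c * y)))) has_real_derivative
      (exp (c * y) * c - exp (- (c * y)) * c) / (exp (c * y) + exp (- (c * y)))) (at y)"
    using S by (auto intro!: derivative_eq_intros simp: field_simps)
  moreover have "(exp (c * y) * c - exp (- (c * y)) * c) / (exp (c * y) + exp (- (c * y)))
      = c * tanh (c * y)"
    unfolding tanh_real_exp_altdef using S by (simp add: field_simps)
  ultimately have "((\<lambda>y. ln (exp (c * y) + exp (- (c * y)))) has_real_derivative c * tanh (c * y)) (at y)"
    by simp
  from DERIV_add[OF this DERIV_cmult[OF has_real_derivative_bin_entropy_half[OF assms], of K]]
  show ?thesis
    unfolding reduced_free_energy_def[abs_def] by simp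
qed

lemma continuous_on_reduced_free_energy: "continuous_on {-1..1} (reduced_free_energy c K)"
proof -
  have "continuous_on {-1..1} (\<lambda>y. bin_entropy ((1 + y) / 2))"
    by (rule continuous_on_compose2[OF continuous_on_bin_entropy, of _ "\<lambda>y. (1 + y) / 2"])
      (auto intro!: continuous_intros)
  moreover have "exp (c * y) + exp (- (c * y)) > 0" for y
    by (simp add: add_pos_pos)
  ultimately show ?thesis
    unfolding reduced_free_energy_def[abs_def] by (intro continuous_intros) (auto simp: less_le)
qed

lemma reduced_free_energy_deriv_sign:
  assumes "c > 0" "K > 0" "0 < z" "z < 1"
  shows "K * artanh z < c * tanh (c * z) \<longleftrightarrow> artanh_tanh_ratio c z < c / K"
    and "c * tanh (c * z) < K * artanh z \<longleftrightarrow> c / K < artanh_tanh_ratio c z"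
proof -
  have "tanh (c * z) > 0"
    using assms by simp
  then show "K * artanh z < c * tanh (c * z) \<longleftrightarrow> artanh_tanh_ratio c z < c / K"
    and "c * tanh (c * z) < K * artanh z \<longleftrightarrow> c / K < artanh_tanh_ratio c z"
    using assms unfolding artanh_tanh_ratio_def by (simp_all add: field_simps)
qed

lemma reduced_free_energy_less_nonneg:
  fixes c K ys y :: real
  assumes c: "c > 0" and K: "K > 0"
    and ys: "ys \<in> {0<..<1}" "artanh_tanh_ratio c ys = c / K"
    and y: "y \<in> {0..1}" "y \<noteq> ys"
  shows "reduced_free_energy c K y < reduced_free_energy c K ys"
proof -
  note mono = strict_mono_on_less[OF strict_mono_on_artanh_tanh_ratio[OF c]]
  have cont: "continuous_on {a..b} (reduced_free_energy c K)" if "-1 \<le> a" "b \<le> 1" for a b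
    using that by (intro continuous_on_subset[OF continuous_on_reduced_free_energy]) auto
  show ?thesis
  proof (cases "y < ys")
    case True
    show ?thesis
    proof (rule DERIV_pos_imp_increasing_open[OF True])
      fix z
      assume "y < z" "z < ys"
      then have "0 < z" "z < 1" "artanh_tanh_ratio c z < c / K"
        using y ys mono[of z ys] by auto
      then show "\<exists>d. (reduced_free_energy c K has_real_derivative d) (at z) \<and> d > 0"
        using has_real_derivative_reduced_free_energy[of z c K]
          reduced_free_energy_deriv_sign(1)[OF c K] by fastforce
    qed (use cont y ys in auto)
  next
    case False
    then have "ys < y"
      using y by simp
    show ?thesis
    proof (rule DERIV_neg_imp_decreasing_open[OF \<open>ys < y\<close>])
      fix z
      assume "ys < z" "z < y"
      then have "0 < z" "z < 1" "c / K < artanh_tanh_ratio c z"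
        using y ys mono[of ys z] by auto
      then show "\<exists>d. (reduced_free_energy c K has_real_derivative d) (at z) \<and> d < 0"
        using has_real_derivative_reduced_free_energy[of z c K]
          reduced_free_energy_deriv_sign(2)[OF c K] by fastforce
    qed (use cont y ys in auto)
  qed
qed

lemma reduced_free_energy_less:
  fixes c K ys y :: real
  assumes c: "c > 0" and K: "K > 0"
    and ys: "ys \<in> {0<..<1}" "artanh_tanh_ratio c ys = c / K"
    and y: "y \<in> {-1..1}" "y \<noteq> ys" "y \<noteq> - ys"
  shows "reduced_free_energy c K y < reduced_free_energy c K ys"
proof (cases "y \<ge> 0")
  case True
  then show ?thesis
    using reduced_free_energy_less_nonneg[OF c K ys] y by auto
next
  case False
  then show ?thesis
    using reduced_free_energy_less_nonneg[OF c K ys, of "- y"] y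
    by (auto simp: reduced_free_energy_minus)
qed

lemma mult_le_half_sum_squares:
  fixes c K x y :: real
  assumes c: "0 \<le> c" "c \<le> sqrt K"
  shows "c * x * y \<le> (x^2 + K * y^2) / 2"
proof -
  have K: "K \<ge> 0"
    using c by (metis order.trans real_sqrt_ge_0_iff)
  have "c * x * y \<le> c * (\<bar>x\<bar> * \<bar>y\<bar>)"
    using c by (metis abs_ge_self abs_mult mult.assoc mult_left_mono)
  also have "\<dots> \<le> sqrt K * (\<bar>x\<bar> * \<bar>y\<bar>)"
    using c by (simp add: mult_right_mono)
  also have "\<dots> \<le> (x^2 + K * y^2) / 2"
  proof -
    have "0 \<le> (\<bar>x\<bar> - sqrt K * \<bar>y\<bar>)^2"
      by simp
    then show ?thesis
      using K by (simp add: power2_eq_square algebra_simps)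
  qed
  finally show ?thesis .
qed

lemma majority_region_half_le:
  assumes "q \<in> majority_region K" "K \<ge> 0"
  shows "1/2 \<le> fst q \<or> 1/2 \<le> snd q"
proof (rule ccontr)
  assume "\<not> ?thesis"
  then have "fst q + K * snd q < 1/2 + K * (1/2)"
    using assms(2) by (intro add_less_le_mono mult_left_mono) auto
  then show False
    using assms(1) by (simp add: majority_region_def field_simps)
qed

lemma free_energy_less_half:
  fixes c K :: real and q :: "real \<times> real"
  assumes K: "K > 0" and c: "0 \<le> c" "c \<le> sqrt K"
    and q: "q \<in> {0..1} \<times> {0..1}" "q \<noteq> (1/2, 1/2)"
  shows "free_energy c K q < free_energy c K (1/2, 1/2)"
proof -
  obtain a b where q_eq: "q = (a, b)"
    by (cases q)
  have ab: "a \<in> {0..1}" "b \<in> {0..1}" "a \<noteq> 1/2 \<or> b \<noteq> 1/2"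
    using q q_eq by auto
  define x y where "x = 2 * a - 1" and "y = 2 * b - 1"
  have entropies: "bin_entropy a + K * bin_entropy b < ln 2 - x^2 / 2 + K * (ln 2 - y^2 / 2)"
  proof (cases "a = 1/2")
    case True
    then have "b \<noteq> 1/2"
      using ab by simp
    then have "K * bin_entropy b < K * (ln 2 - y^2 / 2)"
      using bin_entropy_less_quadratic[of b] ab K unfolding y_def by simp
    moreover have "bin_entropy a \<le> ln 2 - x^2 / 2"
      using bin_entropy_le_quadratic[of a] ab unfolding x_def by simp
    ultimately show ?thesis
      by simp
  next
    case False
    then have "bin_entropy a < ln 2 - x^2 / 2"
      using bin_entropy_less_quadratic[of a] ab unfolding x_def by simp
    moreover have "K * bin_entropy b \<le> K * (ln 2 - y^2 / 2)"
      using bin_entropy_le_quadratic[of b] ab K unfolding y_def by simp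
    ultimately show ?thesis
      by simp
  qed
  have interaction: "c * x * y \<le> (x^2 + K * y^2) / 2"
    using mult_le_half_sum_squares[OF c] .
  have "free_energy c K q = bin_entropy a + K * bin_entropy b + c * x * y"
    unfolding free_energy_def q_eq x_def y_def by simp
  also have "\<dots> < ln 2 - x^2 / 2 + K * (ln 2 - y^2 / 2) + (x^2 + K * y^2) / 2"
    using entropies interaction by linarith
  also have "\<dots> = free_energy c K (1/2, 1/2)"
    unfolding free_energy_def by (simp add: bin_entropy_half algebra_simps)
  finally show ?thesis .
qed

lemma free_energy_eq_gibbs:
  "free_energy c K (a, (1 + y) / 2)
     = (bin_entropy a + c * y * (2 * a - 1)) + K * bin_entropy ((1 + y) / 2)"
  unfolding free_energy_def by (simp add: field_simps)

lemma free_energy_le_reduced: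
  assumes "a \<in> {0..1}"
  shows "free_energy c K (a, (1 + y) / 2) \<le> reduced_free_energy c K y"
    and "2 * a - 1 \<noteq> tanh (c * y) \<Longrightarrow> free_energy c K (a, (1 + y) / 2) < reduced_free_energy c K y"
  using bin_entropy_add_linear_le[of a "c * y"] bin_entropy_add_linear_less[of a "c * y"] assms
  unfolding free_energy_eq_gibbs reduced_free_energy_def by auto

lemma free_energy_tanh_eq_reduced:
  "free_energy c K ((1 + tanh (c * y)) / 2, (1 + y) / 2) = reduced_free_energy c K y"
proof -
  have "2 * ((1 + tanh (c * y)) / 2) - 1 = tanh (c * y)"
    by (simp add: field_simps)
  then show ?thesis
    unfolding free_energy_eq_gibbs reduced_free_energy_def
    using bin_entropy_tanh_eq[of "c * y"] by (simp add: mult.commute)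
qed

lemma free_energy_less_stationary:
  fixes c K ys :: real and q :: "real \<times> real"
  assumes c: "c > 0" and K: "K > 0"
    and ys: "ys \<in> {0<..<1}" "artanh_tanh_ratio c ys = c / K"
    and q: "q \<in> majority_region K" "q \<noteq> ((1 + tanh (c * ys)) / 2, (1 + ys) / 2)"
  shows "free_energy c K q < free_energy c K ((1 + tanh (c * ys)) / 2, (1 + ys) / 2)"
proof -
  define a y where "a = fst q" and "y = 2 * snd q - 1"
  have q_eq: "q = (a, (1 + y) / 2)"
    by (simp add: a_def y_def)
  have a: "a \<in> {0..1}" and y: "y \<in> {-1..1}"
    using q(1) unfolding majority_region_def q_eq by auto
  have "free_energy c K q < reduced_free_energy c K ys"
  proof (cases "y = ys \<or> y = - ys")
    case False
    then show ?thesis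
      unfolding q_eq using free_energy_le_reduced(1)[OF a, of c K y]
        reduced_free_energy_less[OF c K ys y] by simp
  next
    case True
    \<comment> \<open>at y = - ys the Gibbs optimum a < 1/2 violates the majority condition\<close>
    have "2 * a - 1 \<noteq> tanh (c * y)"
    proof
      assume a_eq: "2 * a - 1 = tanh (c * y)"
      from True show False
      proof
        assume "y = ys"
        then show False
          using a_eq q(2) unfolding q_eq by (auto simp: field_simps)
      next
        assume "y = - ys"
        then have "2 * a - 1 = - tanh (c * ys)"
          using a_eq by simp
        moreover have "tanh (c * ys) > 0"
          using c ys by simp
        ultimately have "a < 1/2"
          by linarith
        moreover have "(1 + y) / 2 < 1/2"
          using \<open>y = - ys\<close> ys by simp
        ultimately show False
          using majority_region_half_le[OF q(1) less_imp_le[OF K]] unfolding q_eq by auto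
      qed
    qed
    moreover have "reduced_free_energy c K y = reduced_free_energy c K ys"
      using True reduced_free_energy_minus[of c K ys] by auto
    ultimately show ?thesis
      unfolding q_eq using free_energy_le_reduced(2)[OF a, of c y K] by simp
  qed
  then show ?thesis
    by (simp add: free_energy_tanh_eq_reduced)
qed

lemma compact_majority_region: "compact (majority_region K)"
  unfolding majority_region_def
  by (intro compact_Int_closed compact_Times compact_Icc closed_Collect_le continuous_intros)

lemma continuous_on_free_energy: "continuous_on ({0..1} \<times> {0..1}) (free_energy c K)"
proof -
  have "continuous_on ({0..1} \<times> {0..1}) (\<lambda>q::real \<times> real. bin_entropy (fst q))"
    "continuous_on ({0..1} \<times> {0..1}) (\<lambda>q::real \<times> real. bin_entropy (snd q))"
    by (rule continuous_on_compose2[OF continuous_on_bin_entropy]; auto intro!: continuous_intros)+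
  then show ?thesis
    unfolding free_energy_def[abs_def] by (intro continuous_intros)
qed

lemma continuous_on_free_energy_majority_region:
  "continuous_on (majority_region K) (free_energy c K)"
  by (rule continuous_on_subset[OF continuous_on_free_energy]) (auto simp: majority_region_def)

lemma abs_free_energy_diff_le:
  assumes "q \<in> {0..1} \<times> {0..1}"
  shows "\<bar>free_energy c1 K q - free_energy c2 K q\<bar> \<le> \<bar>c1 - c2\<bar>"
proof -
  have "\<bar>(2 * fst q - 1) * (2 * snd q - 1)\<bar> \<le> 1 * 1"
    unfolding abs_mult using assms by (intro mult_mono) auto
  moreover have "free_energy c1 K q - free_energy c2 K q = (c1 - c2) * ((2 * fst q - 1) * (2 * snd q - 1))"
    unfolding free_energy_def by (simp add: algebra_simps)
  ultimately show ?thesis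
    by (simp add: abs_mult mult_left_le)
qed

section \<open>Binomial coefficients and entropy\<close>

lemma exp_bin_entropy_mult_binomial_weight:
  fixes n i :: nat
  assumes "0 < i" "i < n"
  defines "p \<equiv> real i / real n"
  shows "exp (real n * bin_entropy p) * (p ^ i * (1 - p) ^ (n - i)) = 1"
proof -
  have p: "0 < p" "p < 1"
    using assms by (auto simp: p_def)
  have "real n * bin_entropy p = - (real i * ln p) - real (n - i) * ln (1 - p)"
    unfolding bin_entropy_def using assms by (simp add: p_def of_nat_diff algebra_simps)
  moreover have "p ^ i * (1 - p) ^ (n - i) = exp (real i * ln p + real (n - i) * ln (1 - p))"
    using p by (simp add: exp_add ln_realpow[symmetric])
  ultimately show ?thesis
    by (simp flip: exp_add)
qed

lemma binomial_le_exp_bin_entropy: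
  fixes n i :: nat
  assumes "i \<le> n"
  shows "real (n choose i) \<le> exp (real n * bin_entropy (real i / real n))"
proof (cases "0 < i \<and> i < n")
  case False
  then have "i = 0 \<or> i = n"
    using assms by auto
  then show ?thesis
    by (cases "n = 0") auto
next
  case True
  define p where "p = real i / real n"
  have p: "0 < p" "p < 1"
    using True by (auto simp: p_def)
  have "real (n choose i) * (p ^ i * (1 - p) ^ (n - i))
      \<le> (\<Sum>k\<le>n. real (n choose k) * p ^ k * (1 - p) ^ (n - k))"
    using assms p by (subst mult.assoc[symmetric]) (intro member_le_sum, auto)
  also have "\<dots> = 1"
    using binomial_ring[of p "1 - p" n] by simp
  also have "\<dots> = exp (real n * bin_entropy p) * (p ^ i * (1 - p) ^ (n - i))"
    using exp_bin_entropy_mult_binomial_weight[of i n] True by (simp add: p_def)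
  finally show ?thesis
    using p unfolding p_def[symmetric] by (simp add: mult_le_cancel_right_pos)
qed

lemma binomial_term_Suc:
  fixes p :: real
  assumes "j < n"
  shows "real (n choose Suc j) * p ^ Suc j * (1 - p) ^ (n - Suc j) * (real (Suc j) * (1 - p))
       = real (n choose j) * p ^ j * (1 - p) ^ (n - j) * (real (n - j) * p)"
proof -
  have power: "(1 - p) ^ (n - Suc j) * (1 - p) = (1 - p) ^ (n - j)"
    using assms by (metis Suc_diff_Suc power_Suc2)
  have choose: "real (n choose Suc j) * real (Suc j) = real (n - j) * real (n choose j)"
    by (metis binomial_absorb_comp binomial_absorption mult.commute of_nat_mult)
  have "real (n choose Suc j) * p ^ Suc j * (1 - p) ^ (n - Suc j) * (real (Suc j) * (1 - p))
      = (real (n choose Suc j) * real (Suc j)) * (p * p ^ j) * ((1 - p) ^ (n - Suc j) * (1 - p))"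
    by (simp add: algebra_simps)
  also have "\<dots> = real (n choose j) * p ^ j * (1 - p) ^ (n - j) * (real (n - j) * p)"
    unfolding power choose by (simp add: algebra_simps)
  finally show ?thesis .
qed

lemma binomial_term_mono_around_mean:
  fixes n i j :: nat
  assumes i: "0 < i" "i < n" and j: "j < n"
  defines "p \<equiv> real i / real n"
  defines "t \<equiv> \<lambda>l. real (n choose l) * p ^ l * (1 - p) ^ (n - l)"
  shows "j < i \<Longrightarrow> t j \<le> t (Suc j)" and "i \<le> j \<Longrightarrow> t (Suc j) \<le> t j"
proof -
  have p: "0 < p" "p < 1"
    using i by (auto simp: p_def)
  have t_Suc: "t (Suc j) * (real (Suc j) * (1 - p)) = t j * (real (n - j) * p)"
    unfolding t_def by (rule binomial_term_Suc[OF j])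
  have factor: "real (Suc j) * (1 - p) > 0"
    using p by simp
  have t_nonneg: "t j \<ge> 0"
    using p by (simp add: t_def)
  have diff: "real n * (real (n - j) * p - real (Suc j) * (1 - p)) = real n * (real i - real j - 1) + real i"
    using i j by (simp add: p_def of_nat_diff field_simps)
  show "t j \<le> t (Suc j)" if "j < i"
  proof -
    have "real n * (real (n - j) * p - real (Suc j) * (1 - p)) \<ge> 0"
      using diff that i by simp
    then have "real (Suc j) * (1 - p) \<le> real (n - j) * p"
      using i by (simp add: zero_le_mult_iff)
    then have "t j * (real (Suc j) * (1 - p)) \<le> t (Suc j) * (real (Suc j) * (1 - p))"
      using mult_left_mono[OF _ t_nonneg] t_Suc by simp
    then show ?thesis
      using mult_le_cancel_right_pos[OF factor] by blast
  qed
  show "t (Suc j) \<le> t j" if "i \<le> j"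
  proof -
    have "real n * (real i - real j - 1) \<le> real n * (-1)"
      using that by (intro mult_left_mono) auto
    then have "real n * (real (n - j) * p - real (Suc j) * (1 - p)) \<le> 0"
      using diff i by simp
    then have "real (n - j) * p \<le> real (Suc j) * (1 - p)"
      using i by (simp add: mult_le_0_iff)
    then have "t (Suc j) * (real (Suc j) * (1 - p)) \<le> t j * (real (Suc j) * (1 - p))"
      unfolding t_Suc using mult_left_mono[OF _ t_nonneg] by simp
    then show ?thesis
      using mult_le_cancel_right_pos[OF factor] by blast
  qed
qed

lemma binomial_term_le_at_mean:
  fixes n i j :: nat
  assumes i: "0 < i" "i < n" and j: "j \<le> n"
  defines "p \<equiv> real i / real n"
  shows "real (n choose j) * p ^ j * (1 - p) ^ (n - j) \<le> real (n choose i) * p ^ i * (1 - p) ^ (n - i)"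
proof (cases "j \<le> i")
  case True
  then show ?thesis
  proof (induction j rule: inc_induct)
    case (step m)
    then show ?case
      using binomial_term_mono_around_mean(1)[OF i, of m] i unfolding p_def by simp
  qed simp
next
  case False
  then have "i \<le> j"
    by simp
  from this j show ?thesis
  proof (induction j rule: dec_induct)
    case (step m)
    then show ?case
      using binomial_term_mono_around_mean(2)[OF i, of m] unfolding p_def by simp
  qed simp
qed

lemma exp_bin_entropy_le_binomial:
  fixes n i :: nat
  assumes "i \<le> n"
  shows "exp (real n * bin_entropy (real i / real n)) \<le> (real n + 1) * real (n choose i)"
proof (cases "0 < i \<and> i < n")
  case False
  then have "i = 0 \<or> i = n"
    using assms by auto
  then show ?thesis
    by (cases "n = 0") auto
next
  case True
  define p where "p = real i / real n"
  have p: "0 < p" "p < 1"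
    using True by (auto simp: p_def)
  define w where "w = p ^ i * (1 - p) ^ (n - i)"
  have w: "w > 0"
    using p by (simp add: w_def)
  have "exp (real n * bin_entropy p) * w = 1"
    using exp_bin_entropy_mult_binomial_weight[of i n] True by (simp add: p_def w_def)
  also have "\<dots> = (\<Sum>j\<le>n. real (n choose j) * p ^ j * (1 - p) ^ (n - j))"
    using binomial_ring[of p "1 - p" n] by simp
  also have "\<dots> \<le> (\<Sum>j\<le>n. real (n choose i) * p ^ i * (1 - p) ^ (n - i))"
    using binomial_term_le_at_mean[of i n] True unfolding p_def by (intro sum_mono) auto
  also have "\<dots> = (real n + 1) * real (n choose i) * w"
    by (simp add: w_def algebra_simps)
  finally show ?thesis
    using mult_le_cancel_right_pos[OF w] unfolding p_def by blast
qed

section \<open>The Ising model on a complete bipartite graph\<close>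

lemma spin_configs_eqI:
  assumes "\<sigma>1 \<in> spin_configs V" "\<sigma>2 \<in> spin_configs V" "s \<in> {-1, 1}"
    and "{v \<in> V. \<sigma>1 v = s} = {v \<in> V. \<sigma>2 v = s}"
  shows "\<sigma>1 = \<sigma>2"
proof (rule PiE_ext)
  show "\<sigma>1 \<in> PiE V (\<lambda>_. {-1, 1})" "\<sigma>2 \<in> PiE V (\<lambda>_. {-1, 1})"
    using assms(1,2) by (simp_all add: spin_configs_def)
  fix v
  assume v: "v \<in> V"
  then have "\<sigma>1 v \<in> {-1, 1}" "\<sigma>2 v \<in> {-1, 1}"
    using assms(1,2) by (auto simp: spin_configs_def PiE_iff)
  moreover have "\<sigma>1 v = s \<longleftrightarrow> \<sigma>2 v = s"
    using v assms(4) by blast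
  ultimately show "\<sigma>1 v = \<sigma>2 v"
    using assms(3) by auto
qed

lemma spin_configs_with_spin_set:
  assumes "s \<in> {-1, 1}" "A \<subseteq> V"
  defines "\<sigma> \<equiv> restrict (\<lambda>v. if v \<in> A then s else - s) V"
  shows "\<sigma> \<in> spin_configs V" and "{v \<in> V. \<sigma> v = s} = A"
proof -
  have "(if v \<in> A then s else - s) \<in> {-1, 1}" for v
    using assms(1) by auto
  then show "\<sigma> \<in> spin_configs V"
    unfolding \<sigma>_def spin_configs_def by (simp add: restrict_PiE_iff)
  have "- s \<noteq> s"
    using assms(1) by auto
  then show "{v \<in> V. \<sigma> v = s} = A"
    using assms(2) unfolding \<sigma>_def by auto
qed

lemma card_spin_configs_with_counts:
  fixes L R :: "'v set" and s :: int
  assumes fin: "finite L" "finite R" and disj: "L \<inter> R = {}" and s: "s \<in> {-1, 1}"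
  shows "card {\<sigma> \<in> spin_configs (L \<union> R). card {v \<in> L. \<sigma> v = s} = i \<and> card {v \<in> R. \<sigma> v = s} = j}
         = (card L choose i) * (card R choose j)"
proof -
  define T where "T = {\<sigma> \<in> spin_configs (L \<union> R). card {v \<in> L. \<sigma> v = s} = i \<and> card {v \<in> R. \<sigma> v = s} = j}"
  define f where "f = (\<lambda>\<sigma>::'v \<Rightarrow> int. ({v \<in> L. \<sigma> v = s}, {v \<in> R. \<sigma> v = s}))"
  have "inj_on f T"
  proof (rule inj_onI)
    fix \<sigma>1 \<sigma>2
    assume "\<sigma>1 \<in> T" "\<sigma>2 \<in> T" "f \<sigma>1 = f \<sigma>2"
    moreover have "{v \<in> L \<union> R. \<sigma> v = s} = {v \<in> L. \<sigma> v = s} \<union> {v \<in> R. \<sigma> v = s}" for \<sigma> :: "'v \<Rightarrow> int"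
      by auto
    ultimately show "\<sigma>1 = \<sigma>2"
      using s by (intro spin_configs_eqI[of \<sigma>1 "L \<union> R" \<sigma>2 s]) (auto simp: T_def f_def)
  qed
  moreover have "f ` T = {A. A \<subseteq> L \<and> card A = i} \<times> {C. C \<subseteq> R \<and> card C = j}"
  proof
    show "f ` T \<subseteq> {A. A \<subseteq> L \<and> card A = i} \<times> {C. C \<subseteq> R \<and> card C = j}"
      unfolding T_def f_def by auto
  next
    show "{A. A \<subseteq> L \<and> card A = i} \<times> {C. C \<subseteq> R \<and> card C = j} \<subseteq> f ` T"
    proof clarify
      fix A C
      assume AC: "A \<subseteq> L" "C \<subseteq> R" "i = card A" "j = card C"
      then have "A \<union> C \<subseteq> L \<union> R"
        by auto
      note \<sigma> = spin_configs_with_spin_set[OF s this]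
      let ?\<sigma> = "restrict (\<lambda>v. if v \<in> A \<union> C then s else - s) (L \<union> R)"
      have "{v \<in> L. ?\<sigma> v = s} = A" "{v \<in> R. ?\<sigma> v = s} = C"
        using \<sigma>(2) AC disj by blast+
      then show "(A, C) \<in> f ` T"
        using \<sigma>(1) AC unfolding T_def f_def by (intro image_eqI[of _ _ ?\<sigma>]) auto
    qed
  qed
  ultimately have "card T = card ({A. A \<subseteq> L \<and> card A = i} \<times> {C. C \<subseteq> R \<and> card C = j})"
    by (metis card_image)
  then show ?thesis
    unfolding T_def using fin by (simp add: card_cartesian_product n_subsets)
qed

lemma sum_spins_eq:
  fixes L :: "'v set" and \<sigma> :: "'v \<Rightarrow> int" and s :: int
  assumes fin: "finite L" and spins: "\<And>v. v \<in> L \<Longrightarrow> \<sigma> v \<in> {-1, 1}" and s: "s \<in> {-1, 1}"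
  shows "(\<Sum>v\<in>L. real_of_int (\<sigma> v)) = real_of_int s * (2 * real (card {v \<in> L. \<sigma> v = s}) - real (card L))"
proof -
  have "real_of_int (\<sigma> v) = (if \<sigma> v = s then real_of_int s else - real_of_int s)" if "v \<in> L" for v
    using spins[OF that] s by auto
  then have "(\<Sum>v\<in>L. real_of_int (\<sigma> v)) = (\<Sum>v\<in>L. if \<sigma> v = s then real_of_int s else - real_of_int s)"
    by (rule sum.cong[OF refl])
  also have "\<dots> = real (card {v \<in> L. \<sigma> v = s}) * real_of_int s
      - real (card {v \<in> L. \<sigma> v \<noteq> s}) * real_of_int s"
    using fin by (simp add: sum.If_cases Collect_conj_eq Int_commute Compl_eq set_diff_eq)
  also have "{v \<in> L. \<sigma> v \<noteq> s} = L - {v \<in> L. \<sigma> v = s}"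
    by auto
  also have "card (L - {v \<in> L. \<sigma> v = s}) = card L - card {v \<in> L. \<sigma> v = s}"
    using fin by (simp add: card_Diff_subset)
  finally show ?thesis
    using fin card_mono[of L "{v \<in> L. \<sigma> v = s}"] by (simp add: of_nat_diff algebra_simps)
qed

lemma ising_weight_complete_bipartite:
  assumes "finite L" "finite R"
  shows "ising_weight (L \<times> R) (\<lambda>_ _. \<beta>) \<sigma> =
         exp (\<beta> * (\<Sum>u\<in>L. real_of_int (\<sigma> u)) * (\<Sum>v\<in>R. real_of_int (\<sigma> v)))"
proof -
  have "(\<Sum>(u, v)\<in>L \<times> R. \<beta> * real_of_int (\<sigma> u) * real_of_int (\<sigma> v))
      = (\<Sum>u\<in>L. \<Sum>v\<in>R. \<beta> * (real_of_int (\<sigma> u) * real_of_int (\<sigma> v)))"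
    by (simp add: sum.cartesian_product[symmetric] mult.assoc)
  also have "\<dots> = \<beta> * (\<Sum>u\<in>L. \<Sum>v\<in>R. real_of_int (\<sigma> u) * real_of_int (\<sigma> v))"
    by (simp add: sum_distrib_left)
  also have "\<dots> = \<beta> * ((\<Sum>u\<in>L. real_of_int (\<sigma> u)) * (\<Sum>v\<in>R. real_of_int (\<sigma> v)))"
    by (simp add: sum_product)
  finally show ?thesis
    unfolding ising_weight_def by (simp add: mult.assoc)
qed

lemma card_Collect_Un_disjoint:
  assumes "finite L" "finite R" "L \<inter> R = {}"
  shows "card {v \<in> L \<union> R. P v} = card {v \<in> L. P v} + card {v \<in> R. P v}"
proof -
  have "{v \<in> L \<union> R. P v} = {v \<in> L. P v} \<union> {v \<in> R. P v}"
    by auto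
  then show ?thesis
    using assms by (simp add: card_Un_disjoint disjoint_iff)
qed

lemma majority_spin_card:
  assumes fin: "finite L" "finite R" and disj: "L \<inter> R = {}" and \<sigma>: "\<sigma> \<in> spin_configs (L \<union> R)"
  defines "s \<equiv> majority_spin L R \<sigma>"
  shows "s \<in> {-1, 1}"
    and "card L + card R \<le> 2 * (card {v \<in> L. \<sigma> v = s} + card {v \<in> R. \<sigma> v = s})"
proof -
  show "s \<in> {-1, 1}"
    unfolding s_def majority_spin_def by auto
  have card_LR: "card (L \<union> R) = card L + card R"
    using fin disj by (simp add: card_Un_disjoint)
  show "card L + card R \<le> 2 * (card {v \<in> L. \<sigma> v = s} + card {v \<in> R. \<sigma> v = s})"
  proof (cases "2 * card {v \<in> L \<union> R. \<sigma> v = 1} \<ge> card L + card R")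
    case True
    then show ?thesis
      using card_Collect_Un_disjoint[OF fin disj] by (simp add: s_def majority_spin_def)
  next
    case False
    have "{v \<in> L \<union> R. \<sigma> v = -1} = (L \<union> R) - {v \<in> L \<union> R. \<sigma> v = 1}"
      using \<sigma> by (auto simp: spin_configs_def PiE_iff)
    then have "card {v \<in> L \<union> R. \<sigma> v = -1} = card (L \<union> R) - card {v \<in> L \<union> R. \<sigma> v = 1}"
      by (simp only:) (rule card_Diff_subset, use fin in auto)
    moreover have "card {v \<in> L \<union> R. \<sigma> v = 1} \<le> card (L \<union> R)"
      using fin by (intro card_mono) auto
    ultimately show ?thesis
      using False card_LR card_Collect_Un_disjoint[OF fin disj]
      by (simp add: s_def majority_spin_def)
  qed
qed

lemma lattice_point_in_majority_region:
  assumes "n > 0" "m > 0" "i \<le> n" "j \<le> m" "n + m \<le> 2 * (i + j)"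
  shows "(real i / real n, real j / real m) \<in> majority_region (real m / real n)"
proof -
  have "real n + real m \<le> 2 * (real i + real j)"
    using assms(5) by (metis of_nat_add of_nat_le_iff of_nat_mult of_nat_numeral)
  have "(1 + real m / real n) / 2 = (real n + real m) / (2 * real n)"
    using assms(1) by (simp add: field_simps)
  also have "\<dots> \<le> 2 * (real i + real j) / (2 * real n)"
    using \<open>real n + real m \<le> 2 * (real i + real j)\<close> by (intro divide_right_mono) auto
  also have "\<dots> = real i / real n + real m / real n * (real j / real m)"
    using assms(1,2) by (simp add: field_simps)
  finally show ?thesis
    unfolding majority_region_def using assms by (auto simp: field_simps)
qed

locale complete_bipartite_ising =
  fixes L R :: "'v set" and n m :: nat and \<beta> :: real
  assumes finite_L: "finite L" and finite_R: "finite R" and disjoint: "L \<inter> R = {}"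
    and card_L: "card L = n" and card_R: "card R = m" and n_pos: "n > 0" and m_pos: "m > 0"
begin

definition Z :: real where
  "Z = ising_Z (L \<union> R) (L \<times> R) (\<lambda>_ _. \<beta>)"

definition Pr :: "real \<times> real \<Rightarrow> real" where
  "Pr q = phase_prob L R (L \<times> R) (\<lambda>_ _. \<beta>) q"

definition phase_class :: "real \<times> real \<Rightarrow> ('v \<Rightarrow> int) set" where
  "phase_class q = {\<sigma> \<in> spin_configs (L \<union> R). phase L R \<sigma> = q}"

definition count_class :: "int \<Rightarrow> nat \<Rightarrow> nat \<Rightarrow> ('v \<Rightarrow> int) set" where
  "count_class s i j =
     {\<sigma> \<in> spin_configs (L \<union> R). card {v \<in> L. \<sigma> v = s} = i \<and> card {v \<in> R. \<sigma> v = s} = j}"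

definition phase_weight :: "real \<times> real \<Rightarrow> real" where
  "phase_weight q = exp (real n * (\<beta> * real m) * (2 * fst q - 1) * (2 * snd q - 1))"

lemma finite_spin_configs: "finite (spin_configs (L \<union> R))"
  unfolding spin_configs_def using finite_L finite_R by (intro finite_PiE) auto

lemma Z_pos: "Z > 0"
proof -
  have "restrict (\<lambda>_. 1) (L \<union> R) \<in> spin_configs (L \<union> R)"
    unfolding spin_configs_def by auto
  then show ?thesis
    unfolding Z_def ising_Z_def using finite_spin_configs
    by (intro sum_pos) (auto simp: ising_weight_def)
qed

lemma card_count_class:
  assumes "s \<in> {-1, 1}"
  shows "card (count_class s i j) = (n choose i) * (m choose j)"
  using card_spin_configs_with_counts[OF finite_L finite_R disjoint assms] card_L card_R
  by (simp add: count_class_def)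

lemma phase_eq_counts:
  assumes "\<sigma> \<in> spin_configs (L \<union> R)"
  obtains s i j where "s \<in> {-1, 1}" "\<sigma> \<in> count_class s i j" "phase L R \<sigma> = (real i / real n, real j / real m)"
    "i \<le> n" "j \<le> m" "n + m \<le> 2 * (i + j)"
proof
  let ?s = "majority_spin L R \<sigma>"
  show "?s \<in> {-1, 1}" "n + m \<le> 2 * (card {v \<in> L. \<sigma> v = ?s} + card {v \<in> R. \<sigma> v = ?s})"
    using majority_spin_card[OF finite_L finite_R disjoint assms] card_L card_R by simp_all
  show "\<sigma> \<in> count_class ?s (card {v \<in> L. \<sigma> v = ?s}) (card {v \<in> R. \<sigma> v = ?s})"
    using assms by (simp add: count_class_def)
  show "phase L R \<sigma> = (real (card {v \<in> L. \<sigma> v = ?s}) / real n, real (card {v \<in> R. \<sigma> v = ?s}) / real m)"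
    unfolding phase_def Let_def card_L card_R ..
  show "card {v \<in> L. \<sigma> v = ?s} \<le> n" "card {v \<in> R. \<sigma> v = ?s} \<le> m"
    unfolding card_L[symmetric] card_R[symmetric] using finite_L finite_R by (auto intro: card_mono)
qed

lemma ising_weight_eq_phase_weight:
  assumes "\<sigma> \<in> spin_configs (L \<union> R)"
  shows "ising_weight (L \<times> R) (\<lambda>_ _. \<beta>) \<sigma> = phase_weight (phase L R \<sigma>)"
proof -
  obtain s i j where s: "s \<in> {-1, 1}" and \<sigma>: "\<sigma> \<in> count_class s i j"
    and phase: "phase L R \<sigma> = (real i / real n, real j / real m)"
    using phase_eq_counts[OF assms] .
  have spins: "\<sigma> v \<in> {-1, 1}" if "v \<in> L \<union> R" for v
    using assms that by (auto simp: spin_configs_def PiE_iff)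
  have "(\<Sum>v\<in>L. real_of_int (\<sigma> v)) = real_of_int s * (2 * real i - real n)"
    "(\<Sum>v\<in>R. real_of_int (\<sigma> v)) = real_of_int s * (2 * real j - real m)"
    using sum_spins_eq[OF finite_L _ s, of \<sigma>] sum_spins_eq[OF finite_R _ s, of \<sigma>] spins \<sigma>
      card_L card_R by (auto simp: count_class_def)
  then have "\<beta> * (\<Sum>v\<in>L. real_of_int (\<sigma> v)) * (\<Sum>v\<in>R. real_of_int (\<sigma> v))
      = \<beta> * (real_of_int s * real_of_int s) * (2 * real i - real n) * (2 * real j - real m)"
    by (simp add: mult_ac)
  also have "\<dots> = \<beta> * (2 * real i - real n) * (2 * real j - real m)"
    using s by auto
  also have "\<dots> = real n * (\<beta> * real m) * (2 * (real i / real n) - 1) * (2 * (real j / real m) - 1)"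
    using n_pos m_pos by (simp add: field_simps)
  finally show ?thesis
    unfolding ising_weight_complete_bipartite[OF finite_L finite_R] phase phase_weight_def by simp
qed

lemma Pr_mult_Z: "Pr q * Z = real (card (phase_class q)) * phase_weight q"
proof -
  have "Pr q * Z = (\<Sum>\<sigma>\<in>phase_class q. ising_weight (L \<times> R) (\<lambda>_ _. \<beta>) \<sigma>)"
    using Z_pos unfolding Pr_def phase_prob_def ising_mu_def phase_class_def Z_def
    by (simp add: sum_divide_distrib[symmetric])
  also have "\<dots> = (\<Sum>\<sigma>\<in>phase_class q. phase_weight q)"
    by (intro sum.cong) (auto simp: phase_class_def ising_weight_eq_phase_weight)
  finally show ?thesis
    by simp
qed

lemma exp_free_energy:
  "exp (real n * free_energy (\<beta> * real m) (real m / real n) (a, b))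
     = exp (real n * bin_entropy a) * exp (real m * bin_entropy b) * phase_weight (a, b)"
proof -
  have "real n * free_energy (\<beta> * real m) (real m / real n) (a, b) =
      real n * bin_entropy a + real m * bin_entropy b + real n * (\<beta> * real m) * (2 * a - 1) * (2 * b - 1)"
    unfolding free_energy_def using n_pos by (simp add: algebra_simps)
  then show ?thesis
    unfolding phase_weight_def by (simp add: exp_add)
qed


lemma phase_in_majority_region:
  assumes "\<sigma> \<in> spin_configs (L \<union> R)"
  shows "phase L R \<sigma> \<in> majority_region (real m / real n)"
proof -
  obtain s i j where "phase L R \<sigma> = (real i / real n, real j / real m)"
    and "i \<le> n" "j \<le> m" "n + m \<le> 2 * (i + j)"
    using phase_eq_counts[OF assms] .
  then show ?thesis
    using lattice_point_in_majority_region n_pos m_pos by simp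
qed

lemma Pr_pos_imp_majority_region:
  assumes "Pr q > 0"
  shows "q \<in> majority_region (real m / real n)"
proof -
  have "phase_class q \<noteq> {}"
    using assms Pr_mult_Z[of q] Z_pos by (auto simp: zero_less_mult_iff)
  then show ?thesis
    using phase_in_majority_region by (auto simp: phase_class_def)
qed

lemma card_phase_class_le:
  "card (phase_class (real i / real n, real j / real m)) \<le> 2 * ((n choose i) * (m choose j))"
proof -
  \<comment> \<open>the factor 2 accounts for the two possible majority spins\<close>
  have "phase_class (real i / real n, real j / real m) \<subseteq> count_class 1 i j \<union> count_class (-1) i j"
  proof
    fix \<sigma>
    assume "\<sigma> \<in> phase_class (real i / real n, real j / real m)"
    then have \<sigma>: "\<sigma> \<in> spin_configs (L \<union> R)" "phase L R \<sigma> = (real i / real n, real j / real m)"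
      by (auto simp: phase_class_def)
    then obtain s i' j' where "s \<in> {-1, 1}" "\<sigma> \<in> count_class s i' j'"
      "phase L R \<sigma> = (real i' / real n, real j' / real m)"
      using phase_eq_counts by metis
    moreover have "i' = i" "j' = j"
      using calculation(3) \<sigma>(2) n_pos m_pos by auto
    ultimately show "\<sigma> \<in> count_class 1 i j \<union> count_class (-1) i j"
      by auto
  qed
  then have "card (phase_class (real i / real n, real j / real m))
      \<le> card (count_class 1 i j) + card (count_class (-1) i j)"
    using finite_spin_configs
    by (intro order.trans[OF card_mono card_Un_le]) (auto simp: count_class_def)
  then show ?thesis
    using card_count_class[of 1 i j] card_count_class[of "-1" i j] by simp
qed

lemma card_phase_class_ge:
  assumes "n + m \<le> 2 * (i + j)"
  shows "(n choose i) * (m choose j) \<le> card (phase_class (real i / real n, real j / real m))"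
proof -
  have sub: "count_class 1 i j \<subseteq> phase_class (real i / real n, real j / real m)"
  proof
    fix \<sigma>
    assume \<sigma>: "\<sigma> \<in> count_class 1 i j"
    then have "card {v \<in> L \<union> R. \<sigma> v = 1} = i + j"
      using card_Collect_Un_disjoint[OF finite_L finite_R disjoint] by (simp add: count_class_def)
    then have "majority_spin L R \<sigma> = 1"
      unfolding majority_spin_def using assms card_L card_R by simp
    then show "\<sigma> \<in> phase_class (real i / real n, real j / real m)"
      using \<sigma> unfolding phase_class_def count_class_def phase_def card_L card_R by simp
  qed
  have "finite (phase_class (real i / real n, real j / real m))"
    using finite_spin_configs by (simp add: phase_class_def)
  from card_mono[OF this sub] show ?thesis
    using card_count_class[of 1 i j] by simp
qed

lemma Pr_mult_Z_le:
  "Pr q * Z \<le> 2 * exp (real n * free_energy (\<beta> * real m) (real m / real n) q)"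
proof (cases "phase_class q = {}")
  case True
  then show ?thesis
    using Pr_mult_Z[of q] by (auto simp: less_imp_le)
next
  case False
  then obtain \<sigma> where "\<sigma> \<in> spin_configs (L \<union> R)" "phase L R \<sigma> = q"
    by (auto simp: phase_class_def)
  then obtain i j where q: "q = (real i / real n, real j / real m)" and ij: "i \<le> n" "j \<le> m"
    using phase_eq_counts by metis
  have "real (card (phase_class q)) \<le> 2 * (real (n choose i) * real (m choose j))"
    using card_phase_class_le[of i j] unfolding q by (simp flip: of_nat_mult)
  also have "\<dots> \<le> 2 * (exp (real n * bin_entropy (real i / real n)) * exp (real m * bin_entropy (real j / real m)))"
    using binomial_le_exp_bin_entropy[OF ij(1)] binomial_le_exp_bin_entropy[OF ij(2)]
    by (intro mult_left_mono mult_mono) auto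
  finally have "real (card (phase_class q)) * phase_weight q
      \<le> 2 * (exp (real n * bin_entropy (real i / real n)) * exp (real m * bin_entropy (real j / real m))) * phase_weight q"
    by (rule mult_right_mono) (simp add: phase_weight_def)
  then show ?thesis
    unfolding Pr_mult_Z q exp_free_energy by (simp add: mult.assoc)
qed

lemma Pr_mult_Z_ge:
  assumes ij: "i \<le> n" "j \<le> m" "n + m \<le> 2 * (i + j)"
  defines "q \<equiv> (real i / real n, real j / real m)"
  shows "exp (real n * free_energy (\<beta> * real m) (real m / real n) q) \<le> (real n + 1) * (real m + 1) * (Pr q * Z)"
proof -
  have "exp (real n * free_energy (\<beta> * real m) (real m / real n) q)
      = exp (real n * bin_entropy (real i / real n)) * exp (real m * bin_entropy (real j / real m))
        * phase_weight q"
    unfolding q_def exp_free_energy ..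
  also have "\<dots> \<le> ((real n + 1) * real (n choose i) * ((real m + 1) * real (m choose j))) * phase_weight q"
    using exp_bin_entropy_le_binomial[OF ij(1)] exp_bin_entropy_le_binomial[OF ij(2)]
    by (intro mult_right_mono mult_mono) (auto simp: phase_weight_def)
  also have "\<dots> = (real n + 1) * (real m + 1) * (real ((n choose i) * (m choose j)) * phase_weight q)"
    by (simp add: ac_simps)
  also have "\<dots> \<le> (real n + 1) * (real m + 1) * (real (card (phase_class q)) * phase_weight q)"
  proof -
    have "real ((n choose i) * (m choose j)) \<le> real (card (phase_class q))"
      using card_phase_class_ge[OF ij(3)] unfolding q_def by (simp only: of_nat_le_iff)
    then show ?thesis
      by (intro mult_left_mono mult_right_mono) (simp_all add: phase_weight_def)
  qed
  finally show ?thesis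
    unfolding Pr_mult_Z .
qed


lemma free_energy_le_of_Pr_le:
  assumes ij: "i \<le> n" "j \<le> m" "n + m \<le> 2 * (i + j)"
    and le: "Pr (real i / real n, real j / real m) \<le> Pr q"
  defines "F \<equiv> free_energy (\<beta> * real m) (real m / real n)"
  shows "q \<in> majority_region (real m / real n)"
    and "F (real i / real n, real j / real m) \<le> F q + ln (2 * (real n + 1) * (real m + 1)) / real n"
proof -
  define D where "D = 2 * (real n + 1) * (real m + 1)"
  have D: "D > 0"
    by (simp add: D_def add_pos_pos)
  have "exp (real n * F (real i / real n, real j / real m))
      \<le> (real n + 1) * (real m + 1) * (Pr (real i / real n, real j / real m) * Z)"
    unfolding F_def by (rule Pr_mult_Z_ge[OF ij])
  also have "\<dots> \<le> (real n + 1) * (real m + 1) * (Pr q * Z)"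
    using le Z_pos by (intro mult_left_mono mult_right_mono) auto
  finally have lower: "exp (real n * F (real i / real n, real j / real m)) \<le> (real n + 1) * (real m + 1) * (Pr q * Z)" .
  then have "0 < (real n + 1) * (real m + 1) * (Pr q * Z)"
    by (rule less_le_trans[OF exp_gt_zero])
  then have "Pr q * Z > 0"
    by (rule zero_less_mult_pos) (simp add: add_pos_pos)
  then show "q \<in> majority_region (real m / real n)"
    using Pr_pos_imp_majority_region Z_pos by (simp add: zero_less_mult_iff)
  have "exp (real n * F (real i / real n, real j / real m)) \<le> (real n + 1) * (real m + 1) * (2 * exp (real n * F q))"
    using order.trans[OF lower mult_left_mono[OF Pr_mult_Z_le[of q]]] unfolding F_def by simp
  also have "\<dots> = D * exp (real n * F q)"
    by (simp add: D_def ac_simps)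
  also have "\<dots> = exp (ln D + real n * F q)"
    using D by (simp add: exp_add)
  finally have "real n * F (real i / real n, real j / real m) \<le> real n * F q + ln D"
    by simp
  then have "F (real i / real n, real j / real m) \<le> (real n * F q + ln D) / real n"
    using n_pos by (simp add: le_divide_eq ac_simps)
  also have "\<dots> = F q + ln D / real n"
    using n_pos by (simp add: add_divide_distrib)
  finally show "F (real i / real n, real j / real m) \<le> F q + ln (2 * (real n + 1) * (real m + 1)) / real n"
    unfolding D_def .
qed

end

lemma Pr_bip_le_imp_free_energy_le:
  assumes k: "k \<ge> 1" and n: "n > 0" and ij: "i \<le> n" "j \<le> k * n" "n + k * n \<le> 2 * (i + j)"
    and le: "Pr_bip k B n (real i / real n, real j / real (k * n)) \<le> Pr_bip k B n q"
  defines "F \<equiv> free_energy (B * sqrt (real k) / 2) (real k)"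
    and "\<delta> \<equiv> \<bar>beta_n k B n * real (k * n) - B * sqrt (real k) / 2\<bar>"
  shows "q \<in> majority_region (real k)"
    and "F (real i / real n, real j / real (k * n))
         \<le> F q + 2 * \<delta> + ln (2 * (real n + 1) * (real (k * n) + 1)) / real n"
proof -
  define F\<^sub>n where "F\<^sub>n = free_energy (beta_n k B n * real (k * n)) (real k)"
  interpret complete_bipartite_ising "VLn n" "VRn k n" n "k * n" "beta_n k B n"
    using n k by unfold_locales (auto simp: VLn_def VRn_def card_image)
  have "Pr = Pr_bip k B n"
    by (simp add: fun_eq_iff Pr_def Pr_bip_def)
  moreover have K: "real (k * n) / real n = real k"
    using n by simp
  ultimately have q: "q \<in> majority_region (real k)"
    and lattice: "F\<^sub>n (real i / real n, real j / real (k * n))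
         \<le> F\<^sub>n q + ln (2 * (real n + 1) * (real (k * n) + 1)) / real n"
    using free_energy_le_of_Pr_le[OF ij] le unfolding F\<^sub>n_def by simp_all
  have "(real i / real n, real j / real (k * n)) \<in> majority_region (real k)"
    using lattice_point_in_majority_region[OF n _ ij] n k K by simp
  then have dq: "\<bar>F\<^sub>n q - F q\<bar> \<le> \<delta>"
    and dl: "\<bar>F\<^sub>n (real i / real n, real j / real (k * n)) - F (real i / real n, real j / real (k * n))\<bar> \<le> \<delta>"
    using q unfolding F\<^sub>n_def F_def \<delta>_def
    by (auto intro!: abs_free_energy_diff_le simp: majority_region_def)
  then show "F (real i / real n, real j / real (k * n))
      \<le> F q + 2 * \<delta> + ln (2 * (real n + 1) * (real (k * n) + 1)) / real n"
    using lattice abs_le_D1[OF dq] abs_le_D2[OF dl] by linarith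
  show "q \<in> majority_region (real k)"
    by (rule q)
qed

section \<open>Convergence of the maximizing phases\<close>

lemma tendsto_unique_maximizer:
  fixes F :: "'a::metric_space \<Rightarrow> real" and x :: "nat \<Rightarrow> 'a" and e :: "nat \<Rightarrow> real"
  assumes D: "compact D" and F: "continuous_on D F" and p: "p \<in> D"
    and max: "\<And>q. q \<in> D \<Longrightarrow> q \<noteq> p \<Longrightarrow> F q < F p"
    and approx: "eventually (\<lambda>n. x n \<in> D \<and> F p - e n \<le> F (x n)) sequentially"
    and e: "e \<longlonglongrightarrow> 0"
  shows "x \<longlonglongrightarrow> p"
proof (rule tendstoI)
  fix \<epsilon> :: real
  assume "\<epsilon> > 0"
  define C where "C = D \<inter> {q. \<epsilon> \<le> dist q p}"
  have "compact C"
    unfolding C_def by (intro compact_Int_closed D closed_Collect_le continuous_intros)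
  show "eventually (\<lambda>n. dist (x n) p < \<epsilon>) sequentially"
  proof (cases "C = {}")
    case True
    show ?thesis
      using approx by eventually_elim (use True in \<open>auto simp: C_def not_le\<close>)
  next
    case False
    \<comment> \<open>F stays a fixed amount below F p on the compact set C away from p\<close>
    obtain qm where qm: "qm \<in> C" "\<And>q. q \<in> C \<Longrightarrow> F q \<le> F qm"
      using continuous_attains_sup[OF \<open>compact C\<close> False continuous_on_subset[OF F]]
      by (auto simp: C_def)
    moreover have "qm \<noteq> p"
      using qm(1) \<open>\<epsilon> > 0\<close> by (auto simp: C_def)
    ultimately have "F qm < F p"
      using max by (simp add: C_def)
    then have "eventually (\<lambda>n. e n < F p - F qm) sequentially"
      using order_tendstoD(2)[OF e] by simp
    then show ?thesis
      using approx
    proof eventually_elim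
      case (elim n)
      then have "x n \<notin> C"
        using qm(2)[of "x n"] by linarith
      then show ?case
        using elim by (auto simp: C_def not_le)
    qed
  qed
qed

lemma ceiling_fraction_tendsto:
  fixes a :: real
  assumes "0 \<le> a"
  shows "(\<lambda>m. real (nat \<lceil>real m * a\<rceil>) / real m) \<longlonglongrightarrow> a"
proof (rule tendsto_sandwich)
  have lower: "real m * a \<le> real (nat \<lceil>real m * a\<rceil>)"
    and upper: "real (nat \<lceil>real m * a\<rceil>) \<le> real m * a + 1" for m
    using assms by (simp_all add: le_of_int_ceiling)
  show "eventually (\<lambda>m. a \<le> real (nat \<lceil>real m * a\<rceil>) / real m) sequentially"
    using eventually_gt_at_top[of "0::nat"]
  proof eventually_elim
    case (elim m)
    then show ?case
      using lower[of m] by (simp add: le_divide_eq mult.commute)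
  qed
  show "eventually (\<lambda>m. real (nat \<lceil>real m * a\<rceil>) / real m \<le> a + 1 / real m) sequentially"
    using eventually_gt_at_top[of "0::nat"]
  proof eventually_elim
    case (elim m)
    then have "real (nat \<lceil>real m * a\<rceil>) / real m \<le> (real m * a + 1) / real m"
      using upper[of m] by (intro divide_right_mono) auto
    also have "\<dots> = a + 1 / real m"
      using elim by (simp add: field_simps)
    finally show ?case .
  qed
  show "(\<lambda>m. a + 1 / real m) \<longlonglongrightarrow> a"
    by real_asymp
qed simp

lemma coupling_tendsto:
  assumes "k \<ge> 1"
  shows "(\<lambda>n. beta_n k B n * real (k * n)) \<longlonglongrightarrow> B * sqrt (real k) / 2"
proof -
  define S where "S = sqrt (real k)"
  have S: "S > 0"
    using assms by (simp add: S_def)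
  have "(\<lambda>n::nat. - (1/2) * ln (1 - B / (real n * S)) * (S^2 * real n)) \<longlonglongrightarrow> B * inverse S * S^2 / 2"
    using S by real_asymp
  moreover have "(\<lambda>n. - (1/2) * ln (1 - B / (real n * S)) * (S^2 * real n)) = (\<lambda>n. beta_n k B n * real (k * n))"
    by (simp add: fun_eq_iff beta_n_def S_def)
  moreover have "B * inverse S * S^2 / 2 = B * sqrt (real k) / 2"
    using S unfolding S_def[symmetric] by (simp add: power2_eq_square)
  ultimately show ?thesis
    by (simp only:)
qed

lemma majority_lattice_approx:
  assumes k: "k \<ge> 1" and p: "p \<in> majority_region (real k)"
  obtains i j :: "nat \<Rightarrow> nat"
  where "\<And>n. i n \<le> n" "\<And>n. j n \<le> k * n" "\<And>n. n + k * n \<le> 2 * (i n + j n)"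
    and "(\<lambda>n. (real (i n) / real n, real (j n) / real (k * n))) \<longlonglongrightarrow> p"
proof
  define a b where "a = fst p" and "b = snd p"
  have ab: "a \<in> {0..1}" "b \<in> {0..1}" "(1 + real k) / 2 \<le> a + real k * b"
    using p by (auto simp: majority_region_def a_def b_def)
  show "nat \<lceil>real n * a\<rceil> \<le> n" "nat \<lceil>real (k * n) * b\<rceil> \<le> k * n" for n
    using ab by (auto simp: ceiling_le_iff mult_left_le)
  show "n + k * n \<le> 2 * (nat \<lceil>real n * a\<rceil> + nat \<lceil>real (k * n) * b\<rceil>)" for n
  proof -
    have "real n * (1 + real k) \<le> real n * (2 * (a + real k * b))"
      using ab by (intro mult_left_mono) auto
    also have "\<dots> \<le> 2 * (real (nat \<lceil>real n * a\<rceil>) + real (nat \<lceil>real (k * n) * b\<rceil>))"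
      using ab by (simp add: algebra_simps le_of_int_ceiling add_mono)
    finally have "real (n + k * n) \<le> real (2 * (nat \<lceil>real n * a\<rceil> + nat \<lceil>real (k * n) * b\<rceil>))"
      by (simp add: algebra_simps)
    then show ?thesis
      by (simp only: of_nat_le_iff)
  qed
  have "strict_mono (\<lambda>n. k * n)"
    using k by (intro strict_monoI) simp
  from LIMSEQ_subseq_LIMSEQ[OF ceiling_fraction_tendsto this] ab
  have "(\<lambda>n. real (nat \<lceil>real (k * n) * b\<rceil>) / real (k * n)) \<longlonglongrightarrow> b"
    unfolding o_def by simp
  with ab have "(\<lambda>n. (real (nat \<lceil>real n * a\<rceil>) / real n, real (nat \<lceil>real (k * n) * b\<rceil>) / real (k * n)))
      \<longlonglongrightarrow> (a, b)"
    by (intro tendsto_Pair ceiling_fraction_tendsto) auto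
  then show "(\<lambda>n. (real (nat \<lceil>real n * a\<rceil>) / real n, real (nat \<lceil>real (k * n) * b\<rceil>) / real (k * n))) \<longlonglongrightarrow> p"
    unfolding a_def b_def prod.collapse .
qed

lemma phase_maximizers_tendsto:
  fixes k :: nat and B :: real and ahat :: "nat \<Rightarrow> real \<times> real"
  assumes k: "k \<ge> 1"
    and max: "\<And>n a. Pr_bip k B n a \<le> Pr_bip k B n (ahat n)"
    and p: "p \<in> majority_region (real k)"
    and strict_max: "\<And>q. q \<in> majority_region (real k) \<Longrightarrow> q \<noteq> p \<Longrightarrow>
      free_energy (B * sqrt (real k) / 2) (real k) q < free_energy (B * sqrt (real k) / 2) (real k) p"
  shows "ahat \<longlonglongrightarrow> p"
proof -
  define F where "F = free_energy (B * sqrt (real k) / 2) (real k)"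
  obtain i j where ij: "\<And>n. i n \<le> n" "\<And>n. j n \<le> k * n" "\<And>n. n + k * n \<le> 2 * (i n + j n)"
    and lattice: "(\<lambda>n. (real (i n) / real n, real (j n) / real (k * n))) \<longlonglongrightarrow> p"
    using majority_lattice_approx[OF k p] by blast
  define q where "q n = (real (i n) / real n, real (j n) / real (k * n))" for n
  define d where "d n = \<bar>beta_n k B n * real (k * n) - B * sqrt (real k) / 2\<bar>" for n
  define err where "err n = ln (2 * (real n + 1) * (real (k * n) + 1)) / real n" for n
  define e where "e n = \<bar>F p - F (q n)\<bar> + 2 * d n + err n" for n
  \<comment> \<open>the lattice point q n is no more likely than the maximizer ahat n\<close>
  have "eventually (\<lambda>n. ahat n \<in> majority_region (real k) \<and> F p - e n \<le> F (ahat n)) sequentially"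
    using eventually_gt_at_top[of "0::nat"]
  proof eventually_elim
    case (elim n)
    note le = Pr_bip_le_imp_free_energy_le[OF k elim ij(1-3) max[of n "q n", unfolded q_def],
        folded F_def d_def err_def q_def]
    then show ?case
      unfolding e_def using abs_ge_self[of "F p - F (q n)"] by auto
  qed
  moreover have "e \<longlonglongrightarrow> 0"
  proof -
    have "q n \<in> majority_region (real k)" if "n > 0" for n
      using lattice_point_in_majority_region[OF that _ ij(1,2,3)[of n]] that k by (simp add: q_def)
    then have "eventually (\<lambda>n. q n \<in> majority_region (real k)) sequentially"
      by (rule eventually_mono[OF eventually_gt_at_top[of "0::nat"]])
    then have "(\<lambda>n. F (q n)) \<longlonglongrightarrow> F p"
      using continuous_on_tendsto_compose[OF continuous_on_free_energy_majority_region
          lattice[folded q_def] p] unfolding F_def by blast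
    moreover have "d \<longlonglongrightarrow> 0"
      using tendsto_rabs[OF tendsto_diff[OF coupling_tendsto[OF k, of B]
          tendsto_const[of "B * sqrt (real k) / 2"]]]
      unfolding d_def[abs_def] by simp
    moreover have "err \<longlonglongrightarrow> 0"
      using k unfolding err_def[abs_def] by real_asymp
    ultimately show ?thesis
      unfolding e_def[abs_def] by (auto intro!: tendsto_eq_intros)
  qed
  ultimately show ?thesis
    using tendsto_unique_maximizer[where F = F, OF compact_majority_region
        continuous_on_free_energy_majority_region[where c = "B * sqrt (real k) / 2" and K = "real k",
          folded F_def]
        p strict_max[folded F_def]]
    by blast
qed

section \<open>The mean-field equations\<close>

lemma exp_eq_odds_iff_artanh:
  fixes a t :: real
  assumes "0 < a" "a < 1"
  shows "exp (-2 * t) = (1 - a) / a \<longleftrightarrow> artanh (2 * a - 1) = t"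
proof -
  have "(1 + (2 * a - 1)) / (1 - (2 * a - 1)) = a / (1 - a)"
    using assms by (simp add: field_simps)
  then have "-2 * artanh (2 * a - 1) = ln ((1 - a) / a)"
    using assms by (simp add: artanh_def ln_div)
  then have odds: "exp (-2 * artanh (2 * a - 1)) = (1 - a) / a"
    using assms by simp
  show ?thesis
    unfolding odds[symmetric] by auto
qed

lemma tanh_artanh_real:
  fixes y :: real
  assumes "-1 < y" "y < 1"
  shows "tanh (artanh y) = y"
proof -
  have "- 2 * artanh y = ln (1 - y) - ln (1 + y)"
    using assms by (simp add: artanh_def ln_div)
  then have "exp (- 2 * artanh y) = (1 - y) / (1 + y)"
    using assms by (simp add: exp_diff)
  then show ?thesis
    using assms unfolding tanh_real_altdef
    by (simp only: mult_minus_left [symmetric]) (simp add: field_simps)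
qed

definition mean_field_solution :: "real \<Rightarrow> real \<Rightarrow> real \<times> real \<Rightarrow> bool" where
  "mean_field_solution B K p \<longleftrightarrow>
     p \<in> {1/2<..<1} \<times> {1/2<..<1}
     \<and> exp (B * sqrt K * (1 - 2 * snd p)) = (1 - fst p) / fst p
     \<and> exp (B / sqrt K * (1 - 2 * fst p)) = (1 - snd p) / snd p"

lemma mean_field_solution_iff_artanh:
  fixes K B :: real and p :: "real \<times> real"
  assumes K: "K > 0"
  defines "c \<equiv> B * sqrt K / 2" and "x \<equiv> 2 * fst p - 1" and "y \<equiv> 2 * snd p - 1"
  shows "mean_field_solution B K p \<longleftrightarrow>
    x \<in> {0<..<1} \<and> y \<in> {0<..<1} \<and> artanh x = c * y \<and> artanh y = c / K * x"
proof -
  have sqrt_K: "sqrt K > 0" "sqrt K * sqrt K = K"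
    using K by simp_all
  have B_div: "B / sqrt K = 2 * c / K"
  proof -
    have "2 * c / K = B * sqrt K / (sqrt K * sqrt K)"
      unfolding c_def sqrt_K(2) by simp
    also have "\<dots> = B / sqrt K"
      using sqrt_K(1) by (subst mult_divide_mult_cancel_right) auto
    finally show ?thesis
      by simp
  qed
  have range: "p \<in> {1/2<..<1} \<times> {1/2<..<1} \<longleftrightarrow> x \<in> {0<..<1} \<and> y \<in> {0<..<1}"
    by (auto simp: x_def y_def mem_Times_iff)
  have "B * sqrt K * (1 - 2 * snd p) = -2 * (c * y)"
    by (simp add: c_def y_def algebra_simps)
  then have odds_x: "exp (B * sqrt K * (1 - 2 * snd p)) = (1 - fst p) / fst p \<longleftrightarrow> artanh x = c * y"
    if "x \<in> {0<..<1}"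
    using exp_eq_odds_iff_artanh[of "fst p" "c * y"] that by (simp add: x_def)
  have "B / sqrt K * (1 - 2 * fst p) = -2 * (c / K * x)"
    unfolding B_div using K by (simp add: x_def field_simps)
  then have odds_y: "exp (B / sqrt K * (1 - 2 * fst p)) = (1 - snd p) / snd p \<longleftrightarrow> artanh y = c / K * x"
    if "y \<in> {0<..<1}"
    using exp_eq_odds_iff_artanh[of "snd p" "c / K * x"] that by (simp add: y_def)
  show ?thesis
    unfolding mean_field_solution_def using range odds_x odds_y by blast
qed

lemma mean_field_solution_iff:
  fixes K B c ys :: real and p :: "real \<times> real"
  assumes K: "K > 0" and c: "c = B * sqrt K / 2" "c > 0"
    and ys: "ys \<in> {0<..<1}" "artanh_tanh_ratio c ys = c / K"
  shows "mean_field_solution B K p \<longleftrightarrow> p = ((1 + tanh (c * ys)) / 2, (1 + ys) / 2)"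
proof -
  define x y where "x = 2 * fst p - 1" and "y = 2 * snd p - 1"
  note critical = mean_field_solution_iff_artanh[OF K, of B p, folded c(1) x_def y_def]
  show ?thesis
  proof
    assume "mean_field_solution B K p"
    then have xy: "x \<in> {0<..<1}" "y \<in> {0<..<1}" "artanh x = c * y" "artanh y = c / K * x"
      using critical by blast+
    then have "x = tanh (c * y)"
      using tanh_artanh_real[of x] by simp
    then have "artanh_tanh_ratio c y = c / K"
      using xy by (simp add: artanh_tanh_ratio_def)
    then have "y = ys"
      using inj_onD[OF strict_mono_on_imp_inj_on[OF strict_mono_on_artanh_tanh_ratio[OF c(2)]]] xy(2) ys
      by simp
    moreover have "p = ((1 + x) / 2, (1 + y) / 2)"
      by (simp add: x_def y_def)
    ultimately show "p = ((1 + tanh (c * ys)) / 2, (1 + ys) / 2)"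
      using \<open>x = tanh (c * y)\<close> by simp
  next
    assume "p = ((1 + tanh (c * ys)) / 2, (1 + ys) / 2)"
    then have "x = tanh (c * ys)" "y = ys"
      by (simp_all add: x_def y_def field_simps)
    moreover have "tanh (c * ys) \<in> {0<..<1}"
      using c(2) ys tanh_real_lt_1 by simp
    moreover have "tanh (c * ys) \<noteq> 0"
      using c(2) ys by simp
    then have "artanh ys = c / K * tanh (c * ys)"
      using ys(2) unfolding artanh_tanh_ratio_def by (simp add: divide_eq_eq)
    ultimately show "mean_field_solution B K p"
      unfolding critical using ys(1) by (simp add: artanh_tanh_real)
  qed
qed

lemma phase_maximizers_tendsto_half:
  assumes k: "k \<ge> 1" and B: "0 < B" "B \<le> 2"
    and max: "\<And>n a. Pr_bip k B n a \<le> Pr_bip k B n (ahat n)"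
  shows "ahat \<longlonglongrightarrow> (1/2, 1/2)"
proof (rule phase_maximizers_tendsto[OF k max])
  show "(1/2, 1/2) \<in> majority_region (real k)"
    by (simp add: majority_region_def field_simps)
  have "0 \<le> B * sqrt (real k) / 2" "B * sqrt (real k) / 2 \<le> sqrt (real k)"
    using B mult_right_mono[of B 2 "sqrt (real k)"] by simp_all
  then show "free_energy (B * sqrt (real k) / 2) (real k) q
      < free_energy (B * sqrt (real k) / 2) (real k) (1/2, 1/2)"
    if "q \<in> majority_region (real k)" "q \<noteq> (1/2, 1/2)" for q
    using free_energy_less_half that k by (auto simp: majority_region_def)
qed

lemma phase_maximizers_tendsto_mean_field:
  assumes k: "k \<ge> 1" and B: "B > 2"
    and max: "\<And>n a. Pr_bip k B n a \<le> Pr_bip k B n (ahat n)"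
  shows "(\<exists>!p. mean_field_solution B (real k) p)
    \<and> (\<forall>p. mean_field_solution B (real k) p \<longrightarrow> ahat \<longlonglongrightarrow> p)"
proof -
  define c where "c = B * sqrt (real k) / 2"
  have K: "real k > 0" and c: "c > 0"
    using k B by (simp_all add: c_def)
  have "real k < c^2"
    using K B one_less_power[of "B / 2" 2] by (simp add: c_def power_mult_distrib power_divide)
  then obtain ys where ys: "ys \<in> {0<..<1}" "artanh_tanh_ratio c ys = c / real k"
    using artanh_tanh_ratio_eq_solvable[OF c K] by blast
  have "tanh (c * ys) > 0"
    using c ys by simp
  then have "((1 + tanh (c * ys)) / 2, (1 + ys) / 2) \<in> majority_region (real k)"
    using ys K tanh_real_lt_1[of "c * ys"] by (auto simp: majority_region_def field_simps)
  then have "ahat \<longlonglongrightarrow> ((1 + tanh (c * ys)) / 2, (1 + ys) / 2)"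
    using free_energy_less_stationary[OF c K ys]
    by (intro phase_maximizers_tendsto[OF k max]) (simp_all flip: c_def)
  then show ?thesis
    unfolding mean_field_solution_iff[OF K c_def c ys] by simp
qed

theorem lemma11:
  fixes k :: nat and B :: real and ahat :: "nat \<Rightarrow> real \<times> real"
  assumes "k \<ge> 1" and "B > 0"
    and max: "\<And>n a. Pr_bip k B n a \<le> Pr_bip k B n (ahat n)"
  shows "(B \<le> 2 \<longrightarrow> ahat \<longlonglongrightarrow> (1/2, 1/2))
       \<and> (B > 2 \<longrightarrow>
           (\<exists>!p. p \<in> {1/2<..<1} \<times> {1/2<..<1}
                 \<and> exp (B * sqrt (real k) * (1 - 2 * snd p)) = (1 - fst p) / fst p
                 \<and> exp (B / sqrt (real k) * (1 - 2 * fst p)) = (1 - snd p) / snd p)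
         \<and> (\<forall>p. p \<in> {1/2<..<1} \<times> {1/2<..<1}
                 \<and> exp (B * sqrt (real k) * (1 - 2 * snd p)) = (1 - fst p) / fst p
                 \<and> exp (B / sqrt (real k) * (1 - 2 * fst p)) = (1 - snd p) / snd p
                 \<longrightarrow> ahat \<longlonglongrightarrow> p))"
  using phase_maximizers_tendsto_half[OF assms(1,2) _ max]
    phase_maximizers_tendsto_mean_field[OF assms(1) _ max]
  unfolding mean_field_solution_def by blast

end
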